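(* Let $n,m,k_1,\ldots,k_r\ge 0$ be integers and let $u_1,\ldots,u_r\in F$ be evaluations at $(C_1,C_2)$ of left normed commutators of the form $[t_1,t_2,t_{j_3},\ldots,t_{j_l}]$ ($j_s\in\{1,2\}$, degree $l\ge 2$). Let $f=C_1^nC_2^mu_1^{k_1}\cdots u_r^{k_r}\in F$. Then $f$ is central in $F$ if and only if $k_1+\cdots+k_r\ge 2$, or else $m=n=k_1=\cdots=k_r=0$.
   Context: $K$ is an infinite field of characteristic different from 2. Let $X=\{x_1,x_2,x_1',x_2'\}$ and $Y=\{y_1,y_2,y_1',y_2'\}$, and let $K[X;Y]\cong K[X]\otimes_K E(Y)$ be the free supercommutative algebra: the $x$'s are even commuting variables, the $y$'s are odd pairwise anticommuting variables, and $E(Y)$ is the Grassmann algebra on the vector space with basis $Y$. Put $C_1=\begin{pmatrix} x_1&y_1\\ y_1'&x_1'\end{pmatrix}$, $C_2=\begin{pmatrix} x_2&y_2\\ y_2'&x_2'\end{pmatrix}$, and let $F=K[C_1,C_2]$ be the unital $K$-subalgebra of $M_2(K[X;Y])$ generated by $C_1,C_2$. Commutators are $[a,b]=ab-ba$, left normed: $[a_1,\ldots,a_k]=[[a_1,\ldots,a_{k-1}],a_k]$; $t_1,t_2$ are free noncommuting variables. *)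

theory Defs
  imports Main
begin

text \<open>The free supercommutative algebra K[X;Y] = K[X] (x) E(Y).
  Even variables x_1, x_2, x_1', x_2' have indices 0, 1, 2, 3;
  odd variables y_1, y_2, y_1', y_2' have indices 0, 1, 2, 3.
  A monomial x^a y_S is a pair (a, S), with a the exponent vector and S the
  set of odd variables occurring (written in increasing index order).
  An element is its coefficient function.\<close>

type_synonym 'k sc = "(nat \<Rightarrow> nat) \<times> nat set \<Rightarrow> 'k"

definition sc_add :: "'k::comm_ring_1 sc \<Rightarrow> 'k sc \<Rightarrow> 'k sc" where
  "sc_add f g = (\<lambda>mo. f mo + g mo)"

definition sc_smult :: "'k::comm_ring_1 \<Rightarrow> 'k sc \<Rightarrow> 'k sc" where
  "sc_smult c f = (\<lambda>mo. c * f mo)"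

text \<open>Sign of y_T * y_U = sign T U * y_(T union U) for disjoint T, U.\<close>
definition gsign :: "nat set \<Rightarrow> nat set \<Rightarrow> 'k::comm_ring_1" where
  "gsign T U = (- 1) ^ card {(t, u). t \<in> T \<and> u \<in> U \<and> u < t}"

definition sc_mult :: "'k::comm_ring_1 sc \<Rightarrow> 'k sc \<Rightarrow> 'k sc" where
  "sc_mult f g = (\<lambda>(a, S). \<Sum>(b, T) \<in> {(b, T). b \<le> a \<and> T \<subseteq> S}.
       gsign T (S - T) * f (b, T) * g (\<lambda>i. a i - b i, S - T))"

definition sc_one :: "'k::comm_ring_1 sc" where
  "sc_one = (\<lambda>mo. if mo = (\<lambda>_. 0, {}) then 1 else 0)"

definition xv :: "nat \<Rightarrow> 'k::comm_ring_1 sc" where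
  "xv i = (\<lambda>mo. if mo = ((\<lambda>_. 0)(i := 1), {}) then 1 else 0)"

definition yv :: "nat \<Rightarrow> 'k::comm_ring_1 sc" where
  "yv i = (\<lambda>mo. if mo = (\<lambda>_. 0, {i}) then 1 else 0)"

text \<open>2x2 matrices over K[X;Y]; row/column index False = 1, True = 2.\<close>
type_synonym 'k mat2 = "bool \<Rightarrow> bool \<Rightarrow> 'k sc"

definition madd :: "'k::comm_ring_1 mat2 \<Rightarrow> 'k mat2 \<Rightarrow> 'k mat2" where
  "madd A B = (\<lambda>i j. sc_add (A i j) (B i j))"

definition msmult :: "'k::comm_ring_1 \<Rightarrow> 'k mat2 \<Rightarrow> 'k mat2" where
  "msmult c A = (\<lambda>i j. sc_smult c (A i j))"

definition mmult :: "'k::comm_ring_1 mat2 \<Rightarrow> 'k mat2 \<Rightarrow> 'k mat2" where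
  "mmult A B = (\<lambda>i j. sc_add (sc_mult (A i False) (B False j)) (sc_mult (A i True) (B True j)))"

definition mone :: "'k::comm_ring_1 mat2" where
  "mone = (\<lambda>i j. if i = j then sc_one else (\<lambda>_. 0))"

primrec mpow :: "'k::comm_ring_1 mat2 \<Rightarrow> nat \<Rightarrow> 'k mat2" where
  "mpow A 0 = mone"
| "mpow A (Suc n) = mmult (mpow A n) A"

definition mprod :: "'k::comm_ring_1 mat2 list \<Rightarrow> 'k mat2" where
  "mprod As = foldr mmult As mone"

definition mcomm :: "'k::comm_ring_1 mat2 \<Rightarrow> 'k mat2 \<Rightarrow> 'k mat2" where
  "mcomm A B = madd (mmult A B) (msmult (- 1) (mmult B A))"

text \<open>C_1 = [[x_1, y_1], [y_1', x_1']], C_2 = [[x_2, y_2], [y_2', x_2']].\<close>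
definition C1 :: "'k::comm_ring_1 mat2" where
  "C1 = (\<lambda>i j. if \<not> i \<and> \<not> j then xv 0 else if \<not> i \<and> j then yv 0
               else if i \<and> \<not> j then yv 2 else xv 2)"

definition C2 :: "'k::comm_ring_1 mat2" where
  "C2 = (\<lambda>i j. if \<not> i \<and> \<not> j then xv 1 else if \<not> i \<and> j then yv 1
               else if i \<and> \<not> j then yv 3 else xv 3)"

definition Cgen :: "nat \<Rightarrow> 'k::comm_ring_1 mat2" where
  "Cgen j = (if j = 1 then C1 else C2)"

inductive_set Falg :: "'k::comm_ring_1 mat2 set" where
  one: "mone \<in> Falg"
| gen1: "C1 \<in> Falg"
| gen2: "C2 \<in> Falg"
| smult: "A \<in> Falg \<Longrightarrow> msmult c A \<in> Falg"
| add: "A \<in> Falg \<Longrightarrow> B \<in> Falg \<Longrightarrow> madd A B \<in> Falg"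
| mult: "A \<in> Falg \<Longrightarrow> B \<in> Falg \<Longrightarrow> mmult A B \<in> Falg"

definition central_in_F :: "'k::comm_ring_1 mat2 \<Rightarrow> bool" where
  "central_in_F f \<longleftrightarrow> f \<in> Falg \<and> (\<forall>g \<in> Falg. mmult f g = mmult g f)"

text \<open>Evaluation at (C_1, C_2) of the left normed commutator
  [t_1, t_2, t_(j_3), ..., t_(j_l)], given by js = [j_3, ..., j_l].\<close>
definition lncomm :: "nat list \<Rightarrow> 'k::comm_ring_1 mat2" where
  "lncomm js = foldl (\<lambda>A j. mcomm A (Cgen j)) (mcomm C1 C2) js"

text \<open>f = C_1^n C_2^m u_1^(k_1) ... u_r^(k_r), where us = [(js_1,k_1),...,(js_r,k_r)]
  and u_i = lncomm js_i.\<close>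
definition fmono :: "nat \<Rightarrow> nat \<Rightarrow> (nat list \<times> nat) list \<Rightarrow> 'k::comm_ring_1 mat2" where
  "fmono n m us = mmult (mpow C1 n) (mmult (mpow C2 m)
      (mprod (map (\<lambda>(js, k). mpow (lncomm js) k) us)))"

end

theory Submission
  imports Defs "HOL-Library.Function_Algebras"
begin

text \<open>Let c = [C_1, C_2]. Any product of three entries of c vanishes in K[X;Y]. Splitting a
  parity-even matrix into matrix units with scalar coefficients, this yields c X c Y c = 0 and
  [C_i, c X c] = 0 for all X, Y in F. So the ideal F c F, which contains all commutators of F and
  all u_i, is annihilated by every c X c, and therefore every element P c Q c S of F c F c F equals
  (c Q c) P S and is central; this covers k_1 + ... + k_r \<ge> 2.
  Conversely, setting x_1', x_2', y_2, y_1', y_2' to zero maps C_1, C_2 to [[x_1, y_1], [0, 0]] and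
  [[x_2, 0], [0, 0]], and each u_i to a matrix whose only nonzero entry is a signed x-monomial times
  y_1 in the upper right corner. In this image f commutes with both generators only if
  n = m = k_1 + ... + k_r = 0.\<close>

section \<open>The supercommutative algebra as a ring\<close>

definition finite_monomial :: "(nat \<Rightarrow> nat) \<times> nat set \<Rightarrow> bool" where
  "finite_monomial mo \<longleftrightarrow> finite {i. fst mo i \<noteq> 0} \<and> finite (snd mo)"

text \<open>On a monomial of infinite support, sc_mult sums over infinitely many divisors and
  so takes the junk value 0. Coefficient functions vanishing on such monomials form a ring.\<close>
definition sc_supported :: "'k::comm_ring_1 sc \<Rightarrow> bool" where
  "sc_supported f \<longleftrightarrow> (\<forall>mo. f mo \<noteq> 0 \<longrightarrow> finite_monomial mo)"

definition divisors :: "(nat \<Rightarrow> nat) \<Rightarrow> nat set \<Rightarrow> ((nat \<Rightarrow> nat) \<times> nat set) set" where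
  "divisors a S = {(b, T). b \<le> a \<and> T \<subseteq> S}"

lemma sc_mult_apply:
  "sc_mult f g (a, S) =
     (\<Sum>x \<in> divisors a S. gsign (snd x) (S - snd x) * f x * g (a - fst x, S - snd x))"
  by (simp add: sc_mult_def divisors_def fun_diff_def split_def)

lemma finite_fun_le:
  fixes a :: "nat \<Rightarrow> nat"
  assumes "finite {i. a i \<noteq> 0}"
  shows "finite {b. b \<le> a}"
proof -
  let ?A = "{i. a i \<noteq> 0}" and ?B = "{..Max (a ` {i. a i \<noteq> 0})}"
  have "{b. b \<le> a} \<subseteq> {f. \<forall>x. (x \<in> ?A \<longrightarrow> f x \<in> ?B) \<and> (x \<notin> ?A \<longrightarrow> f x = 0)}"
  proof (intro subsetI CollectI allI conjI impI)
    fix b :: "nat \<Rightarrow> nat" and x assume "b \<in> {b. b \<le> a}"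
    then have bx: "b x \<le> a x" by (simp add: le_fun_def)
    show "b x \<in> ?B" if "x \<in> ?A"
      using bx assms that by (auto intro: le_trans[OF bx] Max_ge)
    show "b x = 0" if "x \<notin> ?A" using bx that by simp
  qed
  moreover have "finite {f. \<forall>x. (x \<in> ?A \<longrightarrow> f x \<in> ?B) \<and> (x \<notin> ?A \<longrightarrow> f x = 0)}"
    by (rule finite_set_of_finite_funs) (use assms in auto)
  ultimately show ?thesis by (rule finite_subset)
qed

lemma finite_divisors: "finite_monomial (a, S) \<Longrightarrow> finite (divisors a S)"
proof -
  assume fin: "finite_monomial (a, S)"
  then have "finite {b. b \<le> a}" by (intro finite_fun_le) (simp add: finite_monomial_def)
  then have "finite ({b. b \<le> a} \<times> Pow S)" using fin by (simp add: finite_monomial_def)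
  moreover have "divisors a S = {b. b \<le> a} \<times> Pow S" by (auto simp: divisors_def)
  ultimately show ?thesis by simp
qed

lemma infinite_divisors:
  assumes "\<not> finite_monomial (a, S)"
  shows "infinite (divisors a S)"
proof
  assume fin: "finite (divisors a S)"
  have "(\<lambda>T. (0, T)) ` Pow S \<subseteq> divisors a S" by (auto simp: divisors_def)
  then have "finite ((\<lambda>T. (0 :: nat \<Rightarrow> nat, T)) ` Pow S)" using fin by (rule finite_subset)
  then have "finite S" by (auto dest: finite_imageD simp: inj_on_def)
  let ?e = "\<lambda>i. ((0 :: nat \<Rightarrow> nat)(i := 1), {} :: nat set)"
  have "?e ` {i. a i \<noteq> 0} \<subseteq> divisors a S" by (auto simp: divisors_def le_fun_def)
  then have "finite (?e ` {i. a i \<noteq> 0})" using fin by (rule finite_subset)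
  moreover have "inj ?e" by (rule injI) (metis fun_upd_same fun_upd_other prod.inject zero_neq_one zero_fun_apply)
  ultimately have "finite {i. a i \<noteq> 0}" by (auto dest: finite_imageD intro: inj_on_subset)
  with \<open>finite S\<close> assms show False by (simp add: finite_monomial_def)
qed

lemma sc_mult_infinite_monomial: "\<not> finite_monomial (a, S) \<Longrightarrow> sc_mult f g (a, S) = 0"
  by (simp add: sc_mult_apply infinite_divisors)

lemma sc_supported_mult: "sc_supported (sc_mult f g)"
  unfolding sc_supported_def by (metis sc_mult_infinite_monomial surj_pair)

lemma sc_supported_add: "sc_supported f \<Longrightarrow> sc_supported g \<Longrightarrow> sc_supported (sc_add f g)"
  unfolding sc_supported_def sc_add_def by (metis add.left_neutral)

lemma sc_supported_smult: "sc_supported f \<Longrightarrow> sc_supported (sc_smult c f)"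
  unfolding sc_supported_def sc_smult_def by (metis mult_zero_right)

lemma sc_supported_zero: "sc_supported (\<lambda>_. 0)"
  by (simp add: sc_supported_def)

lemma sc_supported_one: "sc_supported sc_one"
  by (auto simp: sc_supported_def sc_one_def finite_monomial_def)

lemma sc_supported_xv: "sc_supported (xv i)"
  by (auto simp: sc_supported_def xv_def finite_monomial_def)

lemma sc_supported_yv: "sc_supported (yv i)"
  by (auto simp: sc_supported_def yv_def finite_monomial_def)

lemma finite_restricted_product:
  "finite A \<Longrightarrow> finite B \<Longrightarrow> finite {(t, u). t \<in> A \<and> u \<in> B \<and> P t u}"
  by (rule finite_subset[of _ "A \<times> B"]) auto

lemma gsign_empty [simp]: "gsign {} B = 1" "gsign A {} = 1"
  by (simp_all add: gsign_def)

lemma gsign_Un_left: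
  assumes "finite A" "finite B" "finite C" "A \<inter> B = {}"
  shows "(gsign (A \<union> B) C :: 'k::comm_ring_1) = gsign A C * gsign B C"
proof -
  let ?P = "{(t, u). t \<in> A \<and> u \<in> C \<and> u < t}" and ?Q = "{(t, u). t \<in> B \<and> u \<in> C \<and> u < t}"
  have "{(t, u). t \<in> A \<union> B \<and> u \<in> C \<and> u < t} = ?P \<union> ?Q" by auto
  moreover have "card (?P \<union> ?Q) = card ?P + card ?Q"
    using assms by (intro card_Un_disjoint finite_restricted_product) auto
  ultimately show ?thesis by (simp add: gsign_def power_add)
qed

lemma gsign_Un_right:
  assumes "finite A" "finite B" "finite C" "B \<inter> C = {}"
  shows "(gsign A (B \<union> C) :: 'k::comm_ring_1) = gsign A B * gsign A C"
proof -
  let ?P = "{(t, u). t \<in> A \<and> u \<in> B \<and> u < t}" and ?Q = "{(t, u). t \<in> A \<and> u \<in> C \<and> u < t}"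
  have "{(t, u). t \<in> A \<and> u \<in> B \<union> C \<and> u < t} = ?P \<union> ?Q" by auto
  moreover have "card (?P \<union> ?Q) = card ?P + card ?Q"
    using assms by (intro card_Un_disjoint finite_restricted_product) auto
  ultimately show ?thesis by (simp add: gsign_def power_add)
qed

lemma gsign_cocycle:
  assumes "finite S" "U \<subseteq> T" "T \<subseteq> S"
  shows "(gsign T (S - T) * gsign U (T - U) :: 'k::comm_ring_1) =
         gsign U (S - U) * gsign (T - U) (S - T)"
proof -
  have fin: "finite T" "finite U" using assms by (meson finite_subset)+
  have "(gsign (U \<union> (T - U)) (S - T) :: 'k) = gsign U (S - T) * gsign (T - U) (S - T)"
    by (rule gsign_Un_left) (use fin assms in auto)
  moreover have "U \<union> (T - U) = T" using assms by blast
  moreover have "(gsign U ((T - U) \<union> (S - T)) :: 'k) = gsign U (T - U) * gsign U (S - T)"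
    by (rule gsign_Un_right) (use fin assms in auto)
  moreover have "(T - U) \<union> (S - T) = S - U" using assms by blast
  ultimately show ?thesis by (simp only: ac_simps)
qed

lemma gsign_swap:
  assumes "finite A" "finite B" "A \<inter> B = {}"
  shows "(gsign B A :: 'k::comm_ring_1) = (-1) ^ (card A * card B) * gsign A B"
proof -
  let ?X = "{(t, u). t \<in> A \<and> u \<in> B \<and> u < t}" and ?Y = "{(t, u). t \<in> B \<and> u \<in> A \<and> u < t}"
  let ?Y' = "prod.swap ` ?Y"
  have "A \<times> B = ?X \<union> ?Y'"
  proof (intro equalityI subsetI)
    fix z assume "z \<in> A \<times> B"
    then obtain t u where z: "z = (t, u)" "t \<in> A" "u \<in> B" by blast
    then have "u < t \<or> t < u" using assms(3) by (metis disjoint_iff linorder_neqE_nat)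
    then show "z \<in> ?X \<union> ?Y'"
      using z by (auto intro!: image_eqI[where x = "(u, t)"])
  qed auto
  moreover have "?X \<inter> ?Y' = {}" by auto
  moreover have "card ?Y' = card ?Y" by (rule card_image) (simp add: inj_on_def)
  moreover have "finite ?X" "finite ?Y" using assms by (auto intro: finite_restricted_product)
  ultimately have "card A * card B = card ?X + card ?Y"
    by (simp add: card_Un_disjoint flip: card_cartesian_product)
  then have "(-1::'k) ^ (card A * card B) * gsign A B = (-1) ^ card ?Y * ((-1) ^ card ?X) ^ 2"
    by (simp add: gsign_def power_add power2_eq_square ac_simps)
  also have "\<dots> = (-1) ^ card ?Y"
    by (simp add: power_mult_distrib[symmetric] flip: power_mult)
  finally have "(-1::'k) ^ (card A * card B) * gsign A B = (-1) ^ card ?Y" .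
  then show ?thesis by (simp add: gsign_def)
qed

lemma sc_mult_assoc:
  fixes f g h :: "'k::comm_ring_1 sc"
  shows "sc_mult (sc_mult f g) h = sc_mult f (sc_mult g h)"
proof (rule ext, clarify)
  fix a S
  show "sc_mult (sc_mult f g) h (a, S) = sc_mult f (sc_mult g h) (a, S)"
  proof (cases "finite_monomial (a, S)")
    case False then show ?thesis by (simp add: sc_mult_infinite_monomial)
  next
    case True
    let ?D = "divisors a S"
    have finD: "finite ?D" and fS: "finite S"
      using True by (auto simp: finite_divisors finite_monomial_def)
    let ?F = "\<lambda>x y. gsign (snd x) (S - snd x) * gsign (snd y) (snd x - snd y) * f y
          * g (fst x - fst y, snd x - snd y) * h (a - fst x, S - snd x)"
    let ?G = "\<lambda>y z. gsign (snd y) (S - snd y) * f y * (gsign (snd z) (S - snd y - snd z) * g z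
          * h (a - fst y - fst z, S - snd y - snd z))"
    let ?above = "\<lambda>y. {x \<in> ?D. fst y \<le> fst x \<and> snd y \<subseteq> snd x}"
    have inner: "sc_mult f g x = (\<Sum>y \<in> divisors (fst x) (snd x).
        gsign (snd y) (snd x - snd y) * f y * g (fst x - fst y, snd x - snd y))" for x
      by (cases x) (simp add: sc_mult_apply)
    have "sc_mult (sc_mult f g) h (a, S) = (\<Sum>x \<in> ?D. \<Sum>y \<in> divisors (fst x) (snd x). ?F x y)"
      by (simp add: sc_mult_apply inner sum_distrib_left sum_distrib_right mult.assoc)
    also have "\<dots> = (\<Sum>x \<in> ?D. \<Sum>y \<in> {y \<in> ?D. fst y \<le> fst x \<and> snd y \<subseteq> snd x}. ?F x y)"
      by (intro sum.cong refl arg_cong2[where f = sum]) (auto 4 3 simp: divisors_def intro: order_trans)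
    also have "\<dots> = (\<Sum>y \<in> ?D. \<Sum>x \<in> ?above y. ?F x y)"
      by (rule sum.swap_restrict[OF finD finD])
    also have "\<dots> = (\<Sum>y \<in> ?D. \<Sum>z \<in> divisors (a - fst y) (S - snd y). ?G y z)"
    proof (rule sum.cong[OF refl])
      fix y assume "y \<in> ?D"
      then obtain c U where y: "y = (c, U)" "c \<le> a" "U \<subseteq> S" by (auto simp: divisors_def)
      show "(\<Sum>x \<in> ?above y. ?F x y) = (\<Sum>z \<in> divisors (a - fst y) (S - snd y). ?G y z)"
      proof (rule sum.reindex_bij_witness[where j = "\<lambda>(b, T). (b - c, T - U)"
                                             and i = "\<lambda>(d, V). (c + d, U \<union> V)"])
        fix x assume "x \<in> ?above y"
        then obtain b T where x: "x = (b, T)" "b \<le> a" "T \<subseteq> S" "c \<le> b" "U \<subseteq> T"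
          using y by (auto simp: divisors_def)
        show "(\<lambda>(d, V). (c + d, U \<union> V)) ((\<lambda>(b, T). (b - c, T - U)) x) = x"
          using x by (auto simp: fun_eq_iff le_fun_def)
        show "(\<lambda>(b, T). (b - c, T - U)) x \<in> divisors (a - fst y) (S - snd y)"
          using x y by (auto simp: divisors_def le_fun_def diff_le_mono)
        have "a - c - (b - c) = a - b" "S - U - (T - U) = S - T"
          using x by (auto simp: fun_eq_iff le_fun_def)
        then show "?G y ((\<lambda>(b, T). (b - c, T - U)) x) = ?F x y"
          using x y gsign_cocycle[OF fS \<open>U \<subseteq> T\<close> \<open>T \<subseteq> S\<close>, where 'k = 'k]
          by (simp add: ac_simps)
      next
        fix z assume "z \<in> divisors (a - fst y) (S - snd y)"
        then obtain d V where z: "z = (d, V)" "d \<le> a - c" "V \<subseteq> S - U"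
          using y by (auto simp: divisors_def)
        show "(\<lambda>(b, T). (b - c, T - U)) ((\<lambda>(d, V). (c + d, U \<union> V)) z) = z"
          using z by (auto simp: fun_eq_iff)
        show "(\<lambda>(d, V). (c + d, U \<union> V)) z \<in> ?above y"
          using y z by (auto simp: divisors_def le_fun_def) (metis add.commute le_diff_conv2)
      qed
    qed
    also have "\<dots> = sc_mult f (sc_mult g h) (a, S)"
      by (simp add: sc_mult_apply sum_distrib_left)
    finally show ?thesis .
  qed
qed

lemma sc_mult_add_left: "sc_mult (sc_add f g) h = sc_add (sc_mult f h) (sc_mult g h)"
  by (rule ext, clarify) (simp add: sc_mult_apply sc_add_def algebra_simps sum.distrib)

lemma sc_mult_add_right: "sc_mult h (sc_add f g) = sc_add (sc_mult h f) (sc_mult h g)"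
  by (rule ext, clarify) (simp add: sc_mult_apply sc_add_def algebra_simps sum.distrib)

lemma sc_mult_smult_left: "sc_mult (sc_smult c f) g = sc_smult c (sc_mult f g)"
  by (rule ext, clarify) (simp add: sc_mult_apply sc_smult_def sum_distrib_left mult_ac)

lemma sc_supported_vanishes: "sc_supported f \<Longrightarrow> \<not> finite_monomial mo \<Longrightarrow> f mo = 0"
  unfolding sc_supported_def by blast

lemma sc_one_mult: "sc_supported f \<Longrightarrow> sc_mult sc_one f = f"
proof (rule ext, clarify)
  fix a S assume f: "sc_supported f"
  show "sc_mult sc_one f (a, S) = f (a, S)"
  proof (cases "finite_monomial (a, S)")
    case False then show ?thesis using f by (simp add: sc_mult_infinite_monomial sc_supported_vanishes)
  next
    case True
    have "sc_mult sc_one f (a, S) = (\<Sum>x \<in> divisors a S. if x = (0, {}) then f (a, S) else 0)"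
      unfolding sc_mult_apply by (rule sum.cong) (auto simp: sc_one_def zero_fun_def fun_diff_def)
    also have "\<dots> = f (a, S)"
      using finite_divisors[OF True] by (simp add: divisors_def le_fun_def)
    finally show ?thesis .
  qed
qed

lemma sc_mult_one: "sc_supported f \<Longrightarrow> sc_mult f sc_one = f"
proof (rule ext, clarify)
  fix a S assume f: "sc_supported f"
  show "sc_mult f sc_one (a, S) = f (a, S)"
  proof (cases "finite_monomial (a, S)")
    case False then show ?thesis using f by (simp add: sc_mult_infinite_monomial sc_supported_vanishes)
  next
    case True
    have "sc_mult f sc_one (a, S) = (\<Sum>x \<in> divisors a S. if x = (a, S) then f (a, S) else 0)"
      unfolding sc_mult_apply
    proof (rule sum.cong[OF refl])
      fix x assume "x \<in> divisors a S"
      then obtain b T where x: "x = (b, T)" "b \<le> a" "T \<subseteq> S" by (auto simp: divisors_def)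
      have "((\<lambda>i. a i - b i) = (\<lambda>_. 0) \<and> S - T = {}) \<longleftrightarrow> x = (a, S)"
        using x by (auto simp: fun_eq_iff le_fun_def intro: antisym)
      then show "gsign (snd x) (S - snd x) * f x * sc_one (a - fst x, S - snd x) =
                 (if x = (a, S) then f (a, S) else 0)"
        using x by (auto simp: sc_one_def fun_diff_def)
    qed
    also have "\<dots> = f (a, S)"
      using finite_divisors[OF True] by (simp add: divisors_def)
    finally show ?thesis .
  qed
qed

lemma fun_diff_diff_cancel: "b \<le> a \<Longrightarrow> a - (a - b) = (b :: nat \<Rightarrow> nat)"
  by (simp add: fun_eq_iff le_fun_def)

lemma sc_mult_apply_swapped:
  "sc_mult g f (a, S) =
     (\<Sum>x \<in> divisors a S. gsign (S - snd x) (snd x) * f x * g (a - fst x, S - snd x))"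
  unfolding sc_mult_apply
  by (rule sum.reindex_bij_witness[where i = "\<lambda>(b, T). (a - b, S - T)"
        and j = "\<lambda>(b, T). (a - b, S - T)"])
     (auto simp: divisors_def double_diff fun_diff_diff_cancel mult_ac, auto simp: le_fun_def)

lemma sc_mult_commute_sign:
  fixes f g :: "'k::comm_ring_1 sc"
  assumes sign: "\<And>b T c U. f (b, T) \<noteq> 0 \<Longrightarrow> g (c, U) \<noteq> 0 \<Longrightarrow> finite T \<Longrightarrow> finite U \<Longrightarrow>
      T \<inter> U = {} \<Longrightarrow> gsign U T = s * gsign T U"
  shows "sc_mult g f = sc_smult s (sc_mult f g)"
proof (rule ext, clarify)
  fix a S
  show "sc_mult g f (a, S) = sc_smult s (sc_mult f g) (a, S)"
  proof (cases "finite_monomial (a, S)")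
    case False then show ?thesis by (simp add: sc_mult_infinite_monomial sc_smult_def)
  next
    case True
    then have fS: "finite S" by (simp add: finite_monomial_def)
    have "gsign (S - snd x) (snd x) * f x * g (a - fst x, S - snd x) =
        s * (gsign (snd x) (S - snd x) * f x * g (a - fst x, S - snd x))"
      if "x \<in> divisors a S" for x
    proof -
      from that obtain b T where x: "x = (b, T)" "T \<subseteq> S" by (auto simp: divisors_def)
      then have "finite T" "finite (S - T)" using fS finite_subset by auto
      then show ?thesis
        using sign[of b T "a - b" "S - T"] x by (cases "f x = 0 \<or> g (a - b, S - T) = 0") auto
    qed
    then show ?thesis
      unfolding sc_mult_apply_swapped[of g f] sc_mult_apply[of f g] sc_smult_def sum_distrib_left
      by (rule sum.cong[OF refl])
  qed
qed

definition sc_even :: "'k::comm_ring_1 sc \<Rightarrow> bool" where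
  "sc_even f \<longleftrightarrow> (\<forall>a S. f (a, S) \<noteq> 0 \<longrightarrow> even (card S))"

definition sc_odd :: "'k::comm_ring_1 sc \<Rightarrow> bool" where
  "sc_odd f \<longleftrightarrow> (\<forall>a S. f (a, S) \<noteq> 0 \<longrightarrow> odd (card S))"

lemma sc_even_commute: "sc_even f \<Longrightarrow> sc_mult f g = sc_mult g f"
  using sc_mult_commute_sign[of f g 1] gsign_swap
  by (fastforce simp: sc_even_def sc_smult_def fun_eq_iff)

lemma sc_odd_anticommute: "sc_odd f \<Longrightarrow> sc_odd g \<Longrightarrow> sc_mult f g = sc_smult (- 1) (sc_mult g f)"
  using sc_mult_commute_sign[of g f "- 1"] gsign_swap
  by (fastforce simp: sc_odd_def)

lemma sc_mult_nonzero_factors: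
  assumes "sc_mult f g (a, S) \<noteq> 0"
  obtains b T where "b \<le> a" "T \<subseteq> S" "finite S" "f (b, T) \<noteq> 0" "g (a - b, S - T) \<noteq> 0"
proof -
  have "finite S" using assms sc_mult_infinite_monomial finite_monomial_def by fastforce
  moreover from assms obtain x where x: "x \<in> divisors a S"
    and nz: "gsign (snd x) (S - snd x) * f x * g (a - fst x, S - snd x) \<noteq> 0"
    unfolding sc_mult_apply by (meson sum.not_neutral_contains_not_neutral)
  moreover have "f x \<noteq> 0" "g (a - fst x, S - snd x) \<noteq> 0" using nz by auto
  ultimately show ?thesis using that by (cases x) (auto simp: divisors_def)
qed

lemma card_Diff_add: "finite S \<Longrightarrow> T \<subseteq> S \<Longrightarrow> card S = card T + card (S - T)"
  by (metis card_Diff_subset card_mono finite_subset le_add_diff_inverse)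

lemma sc_even_mult: "sc_even f \<Longrightarrow> sc_even g \<Longrightarrow> sc_even (sc_mult f g)"
  and sc_even_mult_odd: "sc_odd f \<Longrightarrow> sc_odd g \<Longrightarrow> sc_even (sc_mult f g)"
  and sc_odd_mult_even: "sc_even f \<Longrightarrow> sc_odd g \<Longrightarrow> sc_odd (sc_mult f g)"
  and sc_odd_mult: "sc_odd f \<Longrightarrow> sc_even g \<Longrightarrow> sc_odd (sc_mult f g)"
  unfolding sc_even_def sc_odd_def by (metis card_Diff_add even_add sc_mult_nonzero_factors)+

lemma sc_even_add: "sc_even f \<Longrightarrow> sc_even g \<Longrightarrow> sc_even (sc_add f g)"
  and sc_odd_add: "sc_odd f \<Longrightarrow> sc_odd g \<Longrightarrow> sc_odd (sc_add f g)"
  unfolding sc_even_def sc_odd_def sc_add_def by (metis add.left_neutral add.right_neutral)+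

lemma sc_even_smult: "sc_even f \<Longrightarrow> sc_even (sc_smult c f)"
  and sc_odd_smult: "sc_odd f \<Longrightarrow> sc_odd (sc_smult c f)"
  unfolding sc_even_def sc_odd_def sc_smult_def by (metis mult_zero_right)+

definition sc_monomial :: "(nat \<Rightarrow> nat) \<Rightarrow> nat set \<Rightarrow> 'k::comm_ring_1 \<Rightarrow> 'k sc" where
  "sc_monomial a S c = (\<lambda>mo. if mo = (a, S) then c else 0)"

lemma sc_monomial_mult:
  fixes c d :: "'k::comm_ring_1"
  assumes "finite_monomial (a, S)" "finite_monomial (b, T)"
  shows "sc_mult (sc_monomial a S c) (sc_monomial b T d) =
     (if S \<inter> T = {} then sc_monomial (a + b) (S \<union> T) (gsign S T * c * d) else (\<lambda>_. 0))"
proof (rule ext, clarify)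
  fix e U
  let ?term = "\<lambda>x. gsign (snd x) (U - snd x) * sc_monomial a S c x * sc_monomial b T d (e - fst x, U - snd x)"
  have factor: "(a, S) \<in> divisors e U \<and> (e - a, U - S) = (b, T) \<longleftrightarrow>
      (e, U) = (a + b, S \<union> T) \<and> S \<inter> T = {}"
    by (auto simp: divisors_def le_fun_def fun_eq_iff) (metis le_add_diff_inverse)+
  have "sc_mult (sc_monomial a S c) (sc_monomial b T d) (e, U) = (\<Sum>x \<in> divisors e U. ?term x)"
    by (rule sc_mult_apply)
  also have "\<dots> = (\<Sum>x \<in> divisors e U. if x = (a, S) \<and> (e - a, U - S) = (b, T) then gsign S T * c * d else 0)"
    by (rule sum.cong) (auto simp: sc_monomial_def)
  also have "\<dots> = (if (e, U) = (a + b, S \<union> T) \<and> S \<inter> T = {} then gsign S T * c * d else 0)"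
  proof (cases "(e, U) = (a + b, S \<union> T) \<and> S \<inter> T = {}")
    case True
    then have "finite_monomial (e, U)" using assms
      by (auto simp: finite_monomial_def intro: finite_subset[of _ "{i. a i \<noteq> 0} \<union> {i. b i \<noteq> 0}"])
    then show ?thesis using True factor by (simp add: finite_divisors if_distrib cong: if_cong)
  next
    case False
    then show ?thesis using factor by (intro trans[OF sum.neutral]) auto
  qed
  finally show "sc_mult (sc_monomial a S c) (sc_monomial b T d) (e, U) =
     (if S \<inter> T = {} then sc_monomial (a + b) (S \<union> T) (gsign S T * c * d) else (\<lambda>_. 0)) (e, U)"
    by (auto simp: sc_monomial_def)
qed

typedef (overloaded) ('k::comm_ring_1) salg = "{f :: 'k sc. sc_supported f}"
  morphisms sc_of salg_of
  by (rule exI[of _ "\<lambda>_. 0"]) (simp add: sc_supported_zero)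

setup_lifting type_definition_salg

instantiation salg :: (comm_ring_1) ring_1
begin

lift_definition zero_salg :: "'a salg" is "\<lambda>_. 0" by (rule sc_supported_zero)
lift_definition one_salg :: "'a salg" is sc_one by (rule sc_supported_one)
lift_definition plus_salg :: "'a salg \<Rightarrow> 'a salg \<Rightarrow> 'a salg" is sc_add by (rule sc_supported_add)
lift_definition uminus_salg :: "'a salg \<Rightarrow> 'a salg" is "sc_smult (-1)" by (rule sc_supported_smult)
lift_definition minus_salg :: "'a salg \<Rightarrow> 'a salg \<Rightarrow> 'a salg" is "\<lambda>f g. sc_add f (sc_smult (-1) g)"
  by (intro sc_supported_add sc_supported_smult)
lift_definition times_salg :: "'a salg \<Rightarrow> 'a salg \<Rightarrow> 'a salg" is sc_mult by (rule sc_supported_mult)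

instance
proof
  fix a b c :: "'a salg"
  show "a * b * c = a * (b * c)" by transfer (rule sc_mult_assoc)
  show "a + b + c = a + (b + c)" by transfer (simp add: sc_add_def add.assoc)
  show "a + b = b + a" by transfer (simp add: sc_add_def add.commute)
  show "0 + a = a" by transfer (simp add: sc_add_def)
  show "- a + a = 0" by transfer (simp add: sc_add_def sc_smult_def)
  show "a - b = a + - b" by transfer simp
  show "1 * a = a" by transfer (rule sc_one_mult)
  show "a * 1 = a" by transfer (rule sc_mult_one)
  show "(a + b) * c = a * c + b * c" by transfer (rule sc_mult_add_left)
  show "a * (b + c) = a * b + a * c" by transfer (rule sc_mult_add_right)
  show "(0::'a salg) \<noteq> 1" by transfer (metis sc_one_def zero_neq_one)
qed

end

lift_definition salg_even :: "'k::comm_ring_1 salg \<Rightarrow> bool" is sc_even .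
lift_definition salg_odd :: "'k::comm_ring_1 salg \<Rightarrow> bool" is sc_odd .

lift_definition xvar :: "nat \<Rightarrow> 'k::comm_ring_1 salg" is xv by (rule sc_supported_xv)
lift_definition yvar :: "nat \<Rightarrow> 'k::comm_ring_1 salg" is yv by (rule sc_supported_yv)
lift_definition sconst :: "'k::comm_ring_1 \<Rightarrow> 'k salg" is "\<lambda>c. sc_smult c sc_one"
  by (intro sc_supported_smult sc_supported_one)

lemma salg_even_commute: "salg_even x \<Longrightarrow> x * y = y * x"
  by transfer (rule sc_even_commute)

lemma salg_odd_anticommute: "salg_odd x \<Longrightarrow> salg_odd y \<Longrightarrow> x * y = - (y * x)"
  by transfer (rule sc_odd_anticommute)

lemma salg_even_mult: "salg_even x \<Longrightarrow> salg_even y \<Longrightarrow> salg_even (x * y)"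
  and salg_even_mult_odd: "salg_odd x \<Longrightarrow> salg_odd y \<Longrightarrow> salg_even (x * y)"
  and salg_odd_mult_even: "salg_even x \<Longrightarrow> salg_odd y \<Longrightarrow> salg_odd (x * y)"
  and salg_odd_mult: "salg_odd x \<Longrightarrow> salg_even y \<Longrightarrow> salg_odd (x * y)"
  and salg_even_add: "salg_even x \<Longrightarrow> salg_even y \<Longrightarrow> salg_even (x + y)"
  and salg_odd_add: "salg_odd x \<Longrightarrow> salg_odd y \<Longrightarrow> salg_odd (x + y)"
  and salg_even_uminus: "salg_even x \<Longrightarrow> salg_even (- x)"
  and salg_odd_uminus: "salg_odd x \<Longrightarrow> salg_odd (- x)"
  by (transfer; simp add: sc_even_mult sc_even_mult_odd sc_odd_mult_even sc_odd_mult
      sc_even_add sc_odd_add sc_even_smult sc_odd_smult)+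

lemma salg_even_diff: "salg_even x \<Longrightarrow> salg_even y \<Longrightarrow> salg_even (x - y)"
  and salg_odd_diff: "salg_odd x \<Longrightarrow> salg_odd y \<Longrightarrow> salg_odd (x - y)"
  by (metis diff_conv_add_uminus salg_even_add salg_even_uminus salg_odd_add salg_odd_uminus)+

lemma salg_even_0: "salg_even 0"
  and salg_odd_0: "salg_odd 0"
  and salg_even_1: "salg_even 1"
  and salg_even_xvar: "salg_even (xvar i)"
  and salg_odd_yvar: "salg_odd (yvar i)"
  and salg_even_sconst: "salg_even (sconst c)"
  by (transfer; simp add: sc_even_def sc_odd_def sc_one_def xv_def yv_def sc_smult_def)+

lemmas salg_parity_intros = salg_even_mult salg_even_mult_odd salg_odd_mult_even salg_odd_mult
  salg_even_add salg_odd_add salg_even_uminus salg_odd_uminus salg_even_diff salg_odd_diff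
  salg_even_0 salg_odd_0 salg_even_1 salg_even_xvar salg_odd_yvar salg_even_sconst

lemma sc_of_sconst_mult: "sc_of (sconst c * x) = sc_smult c (sc_of x)"
  by transfer (simp add: sc_mult_smult_left sc_one_mult)

lemma sconst_minus_one_mult: "sconst (- 1) * x = - x"
  by transfer (simp add: sc_mult_smult_left sc_one_mult)

lemma xv_eq_monomial: "xv i = sc_monomial (0(i := 1)) {} 1"
  and yv_eq_monomial: "yv i = sc_monomial 0 {i} 1"
  by (simp_all add: xv_def yv_def sc_monomial_def fun_eq_iff zero_fun_def)

lemma yvar_square: "yvar i * yvar i = 0"
  by transfer (simp add: yv_eq_monomial sc_monomial_mult finite_monomial_def zero_fun_def)

lemma yvar_anticommute: "yvar i * yvar j = - (yvar j * yvar i)"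
  by (intro salg_odd_anticommute salg_odd_yvar)

lemma xvar_commute: "xvar i * y = y * xvar i"
  by (intro salg_even_commute salg_even_xvar)

lemma yvar_anticommute_less: "j < i \<Longrightarrow> yvar i * yvar j = - (yvar j * yvar i)"
  and yvar_left_anticommute_less: "j < i \<Longrightarrow> yvar i * (yvar j * z) = - (yvar j * (yvar i * z))"
  and yvar_left_square: "yvar i * (yvar i * z) = 0"
  by (simp_all add: yvar_anticommute[of i j] yvar_square flip: mult.assoc)

lemma xvar_left_commute: "xvar i * (y * z) = y * (xvar i * z)"
  by (metis mult.assoc xvar_commute)

text \<open>Normal form of monomials: the y's first, sorted by index (squares vanish), then the x's,
  sorted by ordered rewriting.\<close>
lemmas salg_normalize = mult.assoc distrib_left distrib_right left_diff_distrib right_diff_distrib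
  mult_minus_left mult_minus_right yvar_square yvar_left_square
  yvar_anticommute_less yvar_left_anticommute_less
  xvar_commute[of _ "yvar _"] xvar_left_commute[of _ "yvar _"]
  xvar_commute[of _ "xvar _"] xvar_left_commute[of _ "xvar _"]

definition comm_diag :: "'k::comm_ring_1 salg" where
  "comm_diag = yvar 0 * yvar 3 + yvar 2 * yvar 1"

definition comm_upper :: "'k::comm_ring_1 salg" where
  "comm_upper = (xvar 0 - xvar 2) * yvar 1 - (xvar 1 - xvar 3) * yvar 0"

definition comm_lower :: "'k::comm_ring_1 salg" where
  "comm_lower = (xvar 1 - xvar 3) * yvar 2 - (xvar 0 - xvar 2) * yvar 3"

lemma comm_entries_triple_product:
  assumes "a \<in> {comm_diag, comm_upper, comm_lower}" "b \<in> {comm_diag, comm_upper, comm_lower}"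
    "c \<in> {comm_diag, comm_upper, comm_lower}"
  shows "a * (b * c) = (0 :: 'k::comm_ring_1 salg)"
  using assms unfolding comm_diag_def comm_upper_def comm_lower_def
  by (auto simp: salg_normalize)

section \<open>Two-by-two matrices and the commutator of the generic matrices\<close>

datatype 'a mat22 = Mat (m11: 'a) (m12: 'a) (m21: 'a) (m22: 'a)

instantiation mat22 :: (ring_1) ring_1
begin

definition "0 = Mat 0 0 0 0"
definition "1 = Mat 1 0 0 1"
definition "A + B = Mat (m11 A + m11 B) (m12 A + m12 B) (m21 A + m21 B) (m22 A + m22 B)"
definition "- A = Mat (- m11 A) (- m12 A) (- m21 A) (- m22 A)"
definition "A - B = Mat (m11 A - m11 B) (m12 A - m12 B) (m21 A - m21 B) (m22 A - m22 B)"
definition "A * B = Mat (m11 A * m11 B + m12 A * m21 B) (m11 A * m12 B + m12 A * m22 B)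
                      (m21 A * m11 B + m22 A * m21 B) (m21 A * m12 B + m22 A * m22 B)"

instance
  by standard (simp_all add: zero_mat22_def one_mat22_def plus_mat22_def uminus_mat22_def
      minus_mat22_def times_mat22_def algebra_simps)

end

lemma Mat_mult [simp]:
  "Mat a b c d * Mat a' b' c' d' =
     Mat (a * a' + b * c') (a * b' + b * d') (c * a' + d * c') (c * b' + d * d')"
  and Mat_add [simp]: "Mat a b c d + Mat a' b' c' d' = Mat (a + a') (b + b') (c + c') (d + d')"
  and Mat_diff [simp]: "Mat a b c d - Mat a' b' c' d' = Mat (a - a') (b - b') (c - c') (d - d')"
  and Mat_uminus [simp]: "- Mat a b c d = Mat (- a) (- b) (- c) (- d)"
  by (simp_all add: times_mat22_def plus_mat22_def minus_mat22_def uminus_mat22_def)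

lemma mat22_zero: "0 = Mat 0 0 0 0" and mat22_one: "1 = Mat 1 0 0 1"
  by (simp_all add: zero_mat22_def one_mat22_def)

definition C1m :: "'k::comm_ring_1 salg mat22" where
  "C1m = Mat (xvar 0) (yvar 0) (yvar 2) (xvar 2)"

definition C2m :: "'k::comm_ring_1 salg mat22" where
  "C2m = Mat (xvar 1) (yvar 1) (yvar 3) (xvar 3)"

definition cm :: "'k::comm_ring_1 salg mat22" where
  "cm = Mat comm_diag comm_upper comm_lower comm_diag"

lemma C1m_C2m_commutator: "C1m * C2m - C2m * C1m = cm"
  unfolding C1m_def C2m_def cm_def comm_diag_def comm_upper_def comm_lower_def
  by (simp add: salg_normalize)

definition "E11 = Mat 1 0 0 0"
definition "E12 = Mat 0 1 0 0"
definition "E21 = Mat 0 0 1 0"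
definition "E22 = Mat 0 0 0 1"

definition twist :: "'a::ring_1 mat22 \<Rightarrow> 'a mat22" where
  "twist A = Mat (m11 A) (- m12 A) (- m21 A) (m22 A)"

lemma twist_Mat [simp]: "twist (Mat a b c d) = Mat a (- b) (- c) d"
  by (simp add: twist_def)

lemmas matrix_defs = C1m_def C2m_def cm_def E11_def E12_def E21_def E22_def

text \<open>The two facts about c X c for parity-even X are reduced to the matrix units: moving the
  scalar coefficients of X out (odd ones at the price of a twist) leaves these identities, which
  hold because every product of three entries of c vanishes.\<close>
lemma generator_commutes_cm_unit_cm:
  assumes "C \<in> {C1m, C2m}"
  shows "E \<in> {E11, E22} \<Longrightarrow> C * (cm * E * cm) = cm * E * cm * C"
    and "E \<in> {E12, E21} \<Longrightarrow> twist C * (twist cm * E * cm) = twist cm * E * cm * C"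
  using assms unfolding matrix_defs comm_diag_def comm_upper_def comm_lower_def
  by (auto simp: salg_normalize)

lemma cm_unit_cm_unit_cm:
  fixes E F :: "'k::comm_ring_1 salg mat22"
  shows "E \<in> {E11, E22} \<Longrightarrow> F \<in> {E11, E22} \<Longrightarrow> cm * E * cm * F * cm = 0"
    and "E \<in> {E11, E22} \<Longrightarrow> F \<in> {E12, E21} \<Longrightarrow> twist (cm * E * cm) * F * cm = 0"
    and "E \<in> {E12, E21} \<Longrightarrow> F \<in> {E11, E22} \<Longrightarrow> twist cm * E * cm * F * cm = 0"
    and "E \<in> {E12, E21} \<Longrightarrow> F \<in> {E12, E21} \<Longrightarrow> twist (twist cm * E * cm) * F * cm = 0"
  unfolding matrix_defs
  by (auto simp: mat22_zero salg_normalize comm_entries_triple_product)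

definition mat_even :: "'k::comm_ring_1 salg mat22 \<Rightarrow> bool" where
  "mat_even A \<longleftrightarrow> salg_even (m11 A) \<and> salg_odd (m12 A) \<and> salg_odd (m21 A) \<and> salg_even (m22 A)"

definition mat_odd :: "'k::comm_ring_1 salg mat22 \<Rightarrow> bool" where
  "mat_odd A \<longleftrightarrow> salg_odd (m11 A) \<and> salg_even (m12 A) \<and> salg_even (m21 A) \<and> salg_odd (m22 A)"

lemma mat_even_Mat [simp]:
    "mat_even (Mat a b c d) \<longleftrightarrow> salg_even a \<and> salg_odd b \<and> salg_odd c \<and> salg_even d"
  and mat_odd_Mat [simp]:
    "mat_odd (Mat a b c d) \<longleftrightarrow> salg_odd a \<and> salg_even b \<and> salg_even c \<and> salg_odd d"
  by (simp_all add: mat_even_def mat_odd_def)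

lemma mat_even_mult: "mat_even A \<Longrightarrow> mat_even B \<Longrightarrow> mat_even (A * B)"
  and mat_odd_mult_even: "mat_even A \<Longrightarrow> mat_odd B \<Longrightarrow> mat_odd (A * B)"
  and mat_odd_mult: "mat_odd A \<Longrightarrow> mat_even B \<Longrightarrow> mat_odd (A * B)"
  and mat_even_add: "mat_even A \<Longrightarrow> mat_even B \<Longrightarrow> mat_even (A + B)"
  and mat_even_twist: "mat_even A \<Longrightarrow> mat_even (twist A)"
  by (cases A, cases B; simp add: salg_parity_intros)+

lemma mat_even_one: "mat_even 1"
  and mat_even_C1m: "mat_even C1m"
  and mat_even_C2m: "mat_even C2m"
  and mat_even_cm: "mat_even cm"
  and mat_even_diag_units: "mat_even E11" "mat_even E22"
  and mat_odd_offdiag_units: "mat_odd E12" "mat_odd E21"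
  by (simp_all add: mat22_one matrix_defs comm_diag_def comm_upper_def comm_lower_def
      salg_parity_intros)

definition scalar_mat :: "'k::comm_ring_1 salg \<Rightarrow> 'k salg mat22" where
  "scalar_mat x = Mat x 0 0 x"

lemma mat22_unit_decomposition:
  "X = scalar_mat (m11 X) * E11 + scalar_mat (m12 X) * E12 + scalar_mat (m21 X) * E21
     + scalar_mat (m22 X) * E22"
  by (cases X) (simp add: scalar_mat_def matrix_defs)

lemma scalar_mat_even_commute: "salg_even x \<Longrightarrow> A * scalar_mat x = scalar_mat x * A"
  and scalar_mat_odd_commute_even:
    "salg_odd x \<Longrightarrow> mat_even A \<Longrightarrow> A * scalar_mat x = scalar_mat x * twist A"
  and scalar_mat_odd_commute_odd:
    "salg_odd x \<Longrightarrow> mat_odd A \<Longrightarrow> A * scalar_mat x = scalar_mat x * - twist A"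
  by (cases A; simp add: scalar_mat_def salg_even_commute[of x] salg_even_commute[of _ x]
      salg_odd_anticommute[of _ x])+

lemma cm_scalar_pull:
  assumes "cm * scalar_mat x = scalar_mat x * G"
  shows "cm * (scalar_mat x * E) * cm = scalar_mat x * (G * E * cm)"
  by (metis assms mult.assoc)

lemma commute_through_factor:
  fixes C s :: "'a::semigroup_mult"
  assumes "C * s = s * C'" "C' * K = K * C"
  shows "C * (s * K) = s * K * C"
proof -
  have "C * (s * K) = (C * s) * K" by (simp only: mult.assoc)
  also have "\<dots> = s * (C' * K)" by (simp only: assms(1) mult.assoc)
  also have "\<dots> = s * K * C" by (simp only: assms(2) mult.assoc)
  finally show ?thesis .
qed

lemma generator_commutes_cm_scaled_unit_cm:
  assumes C: "C \<in> {C1m, C2m}"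
  shows "E \<in> {E11, E22} \<Longrightarrow> salg_even x \<Longrightarrow>
      C * (cm * (scalar_mat x * E) * cm) = cm * (scalar_mat x * E) * cm * C"
    and "E \<in> {E12, E21} \<Longrightarrow> salg_odd x \<Longrightarrow>
      C * (cm * (scalar_mat x * E) * cm) = cm * (scalar_mat x * E) * cm * C"
proof -
  assume E: "E \<in> {E11, E22}" and x: "salg_even x"
  show "C * (cm * (scalar_mat x * E) * cm) = cm * (scalar_mat x * E) * cm * C"
    unfolding cm_scalar_pull[OF scalar_mat_even_commute[OF x]]
    by (rule commute_through_factor[OF scalar_mat_even_commute[OF x]
          generator_commutes_cm_unit_cm(1)[OF C E]])
next
  assume E: "E \<in> {E12, E21}" and x: "salg_odd x"
  have "mat_even C" using C mat_even_C1m mat_even_C2m by blast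
  show "C * (cm * (scalar_mat x * E) * cm) = cm * (scalar_mat x * E) * cm * C"
    unfolding cm_scalar_pull[OF scalar_mat_odd_commute_even[OF x mat_even_cm]]
    by (rule commute_through_factor[OF scalar_mat_odd_commute_even[OF x \<open>mat_even C\<close>]
          generator_commutes_cm_unit_cm(2)[OF C E]])
qed

lemma cm_scaled_units_vanish_if:
  assumes "cm * scalar_mat x = scalar_mat x * G" "G * E * cm * scalar_mat y = scalar_mat y * K"
    "K * F * cm = 0"
  shows "cm * (scalar_mat x * E) * cm * (scalar_mat y * F) * cm = 0"
proof -
  have "cm * (scalar_mat x * E) * cm * (scalar_mat y * F) * cm
      = scalar_mat x * (G * E * cm) * (scalar_mat y * F) * cm"
    by (simp only: cm_scalar_pull[OF assms(1)])
  also have "\<dots> = scalar_mat x * ((G * E * cm * scalar_mat y) * F * cm)"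
    by (simp only: mult.assoc)
  also have "\<dots> = scalar_mat x * ((scalar_mat y * K) * F * cm)"
    by (simp only: assms(2))
  also have "\<dots> = scalar_mat x * scalar_mat y * (K * F * cm)"
    by (simp only: mult.assoc)
  finally show ?thesis using assms(3) by simp
qed

lemma cm_unit_cm_parity:
  "E \<in> {E11, E22} \<Longrightarrow> mat_even (cm * E * cm)"
  "E \<in> {E12, E21} \<Longrightarrow> mat_odd (twist cm * E * cm)"
  by (auto intro: mat_even_mult mat_odd_mult mat_odd_mult_even mat_even_twist mat_even_cm
      mat_even_diag_units mat_odd_offdiag_units)

lemma cm_scaled_units_vanish:
  fixes x y :: "'k::comm_ring_1 salg"
  shows "E \<in> {E11, E22} \<Longrightarrow> F \<in> {E11, E22} \<Longrightarrow> salg_even x \<Longrightarrow> salg_even y \<Longrightarrow>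
      cm * (scalar_mat x * E) * cm * (scalar_mat y * F) * cm = 0"
    and "E \<in> {E11, E22} \<Longrightarrow> F \<in> {E12, E21} \<Longrightarrow> salg_even x \<Longrightarrow> salg_odd y \<Longrightarrow>
      cm * (scalar_mat x * E) * cm * (scalar_mat y * F) * cm = 0"
    and "E \<in> {E12, E21} \<Longrightarrow> F \<in> {E11, E22} \<Longrightarrow> salg_odd x \<Longrightarrow> salg_even y \<Longrightarrow>
      cm * (scalar_mat x * E) * cm * (scalar_mat y * F) * cm = 0"
    and "E \<in> {E12, E21} \<Longrightarrow> F \<in> {E12, E21} \<Longrightarrow> salg_odd x \<Longrightarrow> salg_odd y \<Longrightarrow>
      cm * (scalar_mat x * E) * cm * (scalar_mat y * F) * cm = 0"
  subgoal by (rule cm_scaled_units_vanish_if[OF scalar_mat_even_commute[of x cm]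
        scalar_mat_even_commute[of y "cm * E * cm"] cm_unit_cm_unit_cm(1)])
  subgoal by (rule cm_scaled_units_vanish_if[OF scalar_mat_even_commute[of x cm]
        scalar_mat_odd_commute_even[of y "cm * E * cm"] cm_unit_cm_unit_cm(2)])
      (simp_all add: cm_unit_cm_parity)
  subgoal by (rule cm_scaled_units_vanish_if[OF scalar_mat_odd_commute_even[of x cm]
        scalar_mat_even_commute[of y "twist cm * E * cm"] cm_unit_cm_unit_cm(3)])
      (simp_all add: mat_even_cm)
  subgoal by (rule cm_scaled_units_vanish_if[OF scalar_mat_odd_commute_even[of x cm]
        scalar_mat_odd_commute_odd[of y "twist cm * E * cm"]])
      (simp_all add: mat_even_cm cm_unit_cm_parity cm_unit_cm_unit_cm(4))
  done

lemma generator_commutes_cm_even_cm: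
  assumes X: "mat_even X" and C: "C \<in> {C1m, C2m}"
  shows "C * (cm * X * cm) = cm * X * cm * C"
proof -
  have parity: "salg_even (m11 X)" "salg_odd (m12 X)" "salg_odd (m21 X)" "salg_even (m22 X)"
    using X by (simp_all add: mat_even_def)
  show ?thesis
    by (subst (1 2) mat22_unit_decomposition[of X])
       (simp add: distrib_left distrib_right parity generator_commutes_cm_scaled_unit_cm[OF C])
qed

lemma cm_even_cm_even_cm:
  assumes "mat_even X" "mat_even Y"
  shows "cm * X * cm * Y * cm = 0"
proof -
  have parity: "salg_even (m11 X)" "salg_odd (m12 X)" "salg_odd (m21 X)" "salg_even (m22 X)"
    "salg_even (m11 Y)" "salg_odd (m12 Y)" "salg_odd (m21 Y)" "salg_even (m22 Y)"
    using assms by (simp_all add: mat_even_def)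
  show ?thesis
    by (subst mat22_unit_decomposition[of X], subst mat22_unit_decomposition[of Y])
       (simp add: distrib_left distrib_right parity cm_scaled_units_vanish)
qed

section \<open>The algebra F and the ideals generated by the commutator\<close>

definition const_mat :: "'k::comm_ring_1 \<Rightarrow> 'k salg mat22" where
  "const_mat c = scalar_mat (sconst c)"

inductive_set Fm :: "'k::comm_ring_1 salg mat22 set" where
  one: "1 \<in> Fm"
| gen1: "C1m \<in> Fm"
| gen2: "C2m \<in> Fm"
| smult: "A \<in> Fm \<Longrightarrow> const_mat c * A \<in> Fm"
| add: "A \<in> Fm \<Longrightarrow> B \<in> Fm \<Longrightarrow> A + B \<in> Fm"
| mult: "A \<in> Fm \<Longrightarrow> B \<in> Fm \<Longrightarrow> A * B \<in> Fm"

lemma const_mat_commute: "const_mat c * A = A * const_mat c"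
  unfolding const_mat_def by (rule scalar_mat_even_commute[OF salg_even_sconst, symmetric])

lemma const_mat_left_commute: "A * (const_mat c * B) = const_mat c * (A * B)"
  by (metis const_mat_commute mult.assoc)

lemma const_mat_minus_one: "const_mat (- 1) * A = - A"
  by (cases A) (simp add: const_mat_def scalar_mat_def sconst_minus_one_mult)

lemma Fm_mat_even: "A \<in> Fm \<Longrightarrow> mat_even A"
  by (induction rule: Fm.induct)
     (auto intro: mat_even_one mat_even_C1m mat_even_C2m mat_even_mult mat_even_add
       simp: const_mat_def scalar_mat_def salg_parity_intros)

lemma Fm_uminus: "A \<in> Fm \<Longrightarrow> - A \<in> Fm"
  using Fm.smult[of A "- 1"] by (simp add: const_mat_minus_one)

lemma Fm_diff: "A \<in> Fm \<Longrightarrow> B \<in> Fm \<Longrightarrow> A - B \<in> Fm"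
  unfolding diff_conv_add_uminus by (intro Fm.add Fm_uminus)

lemma Fm_zero: "0 \<in> Fm"
  using Fm_diff[OF Fm.one Fm.one] by simp

lemma Fm_power: "A \<in> Fm \<Longrightarrow> A ^ k \<in> Fm"
  by (induction k) (auto intro: Fm.one Fm.mult)

lemma cm_in_Fm: "cm \<in> Fm"
  unfolding C1m_C2m_commutator[symmetric] by (intro Fm_diff Fm.mult Fm.gen1 Fm.gen2)

lemma commutes_with_Fm:
  assumes "Z * C1m = C1m * Z" "Z * C2m = C2m * Z" "G \<in> Fm"
  shows "Z * G = G * Z"
  using assms(3)
proof (induction rule: Fm.induct)
  case (smult A c)
  have "Z * (const_mat c * A) = const_mat c * (Z * A)" by (rule const_mat_left_commute)
  then show ?case by (simp only: smult.IH mult.assoc)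
next
  case (add A B)
  then show ?case by (simp only: distrib_left distrib_right)
next
  case (mult A B)
  have "Z * (A * B) = A * (Z * B)" by (simp only: mult.IH(1) flip: mult.assoc)
  then show ?case by (simp only: mult.IH(2) mult.assoc)
qed (simp_all only: assms(1,2) mult_1_left mult_1_right)

inductive_set Ic :: "'k::comm_ring_1 salg mat22 set" where
  gen: "P \<in> Fm \<Longrightarrow> Q \<in> Fm \<Longrightarrow> P * cm * Q \<in> Ic"
| zero: "0 \<in> Ic"
| add: "A \<in> Ic \<Longrightarrow> B \<in> Ic \<Longrightarrow> A + B \<in> Ic"

inductive_set Icc :: "'k::comm_ring_1 salg mat22 set" where
  gen: "P \<in> Fm \<Longrightarrow> Q \<in> Fm \<Longrightarrow> S \<in> Fm \<Longrightarrow> P * cm * Q * cm * S \<in> Icc"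
| zero: "0 \<in> Icc"
| add: "A \<in> Icc \<Longrightarrow> B \<in> Icc \<Longrightarrow> A + B \<in> Icc"

lemma Ic_in_Fm: "A \<in> Ic \<Longrightarrow> A \<in> Fm"
  by (induction rule: Ic.induct) (auto intro: Fm.mult Fm.add cm_in_Fm Fm_zero)

lemma Ic_mult_left: "A \<in> Ic \<Longrightarrow> G \<in> Fm \<Longrightarrow> G * A \<in> Ic"
proof (induction rule: Ic.induct)
  case (gen P Q) then show ?case by (metis Fm.mult Ic.gen mult.assoc)
qed (auto simp: distrib_left intro: Ic.intros)

lemma Ic_mult_right: "A \<in> Ic \<Longrightarrow> G \<in> Fm \<Longrightarrow> A * G \<in> Ic"
proof (induction rule: Ic.induct)
  case (gen P Q) then show ?case by (metis Fm.mult Ic.gen mult.assoc)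
qed (auto simp: distrib_right intro: Ic.intros)

lemma Ic_uminus: "A \<in> Ic \<Longrightarrow> - A \<in> Ic"
  using Ic_mult_left[OF _ Fm_uminus[OF Fm.one]] by simp

lemma Ic_diff: "A \<in> Ic \<Longrightarrow> B \<in> Ic \<Longrightarrow> A - B \<in> Ic"
  by (metis Ic.add Ic_uminus diff_conv_add_uminus)

lemma cm_in_Ic: "cm \<in> Ic"
  using Ic.gen[OF Fm.one Fm.one] by simp

lemma generator_commutator_in_Ic:
  assumes G: "G \<in> {C1m, C2m}" and T: "T \<in> Fm"
  shows "G * T - T * G \<in> Ic"
  using T
proof (induction rule: Fm.induct)
  case gen1
  have "C2m * C1m - C1m * C2m \<in> Ic"
    using Ic_diff[OF Ic.zero cm_in_Ic] by (simp flip: C1m_C2m_commutator)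
  then show ?case using G by (auto intro: Ic.zero)
next
  case gen2
  then show ?case using G cm_in_Ic by (auto simp: C1m_C2m_commutator intro: Ic.zero)
next
  case (smult A c)
  have "G * (const_mat c * A) - const_mat c * A * G = const_mat c * (G * A - A * G)"
    by (simp add: right_diff_distrib mult.assoc const_mat_left_commute)
  then show ?case using Ic_mult_left[OF smult.IH Fm.smult[OF Fm.one]] by simp
next
  case (add A B)
  have "G * (A + B) - (A + B) * G = (G * A - A * G) + (G * B - B * G)"
    by (simp add: algebra_simps)
  then show ?case using add.IH by (simp add: Ic.add)
next
  case (mult A B)
  have "G * (A * B) - A * B * G = (G * A - A * G) * B + A * (G * B - B * G)"
    by (simp add: algebra_simps)
  then show ?case using mult Ic_mult_left Ic_mult_right Ic.add by metis
qed (simp add: Ic.zero)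

lemma commutator_in_Ic:
  assumes G: "G \<in> Fm" and T: "T \<in> Fm"
  shows "G * T - T * G \<in> Ic"
  using G
proof (induction rule: Fm.induct)
  case (smult A c)
  have "const_mat c * A * T - T * (const_mat c * A) = const_mat c * (A * T - T * A)"
    by (simp add: right_diff_distrib mult.assoc const_mat_left_commute)
  then show ?case using Ic_mult_left[OF smult.IH Fm.smult[OF Fm.one]] by simp
next
  case (add A B)
  have "(A + B) * T - T * (A + B) = (A * T - T * A) + (B * T - T * B)"
    by (simp add: algebra_simps)
  then show ?case using add.IH by (simp add: Ic.add)
next
  case (mult A B)
  have "A * B * T - T * (A * B) = A * (B * T - T * B) + (A * T - T * A) * B"
    by (simp add: algebra_simps)
  then show ?case using mult Ic_mult_left Ic_mult_right Ic.add by metis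
qed (use T generator_commutator_in_Ic in \<open>auto intro: Ic.zero\<close>)

lemma Icc_mult_left: "A \<in> Icc \<Longrightarrow> G \<in> Fm \<Longrightarrow> G * A \<in> Icc"
proof (induction rule: Icc.induct)
  case (gen P Q S)
  then have "(G * P) * cm * Q * cm * S \<in> Icc" by (intro Icc.gen Fm.mult)
  then show ?case by (simp add: mult.assoc)
qed (auto simp: distrib_left intro: Icc.intros)

lemma Icc_mult_right: "A \<in> Icc \<Longrightarrow> G \<in> Fm \<Longrightarrow> A * G \<in> Icc"
proof (induction rule: Icc.induct)
  case (gen P Q S)
  then have "P * cm * Q * cm * (S * G) \<in> Icc" by (intro Icc.gen Fm.mult)
  then show ?case by (simp add: mult.assoc)
qed (auto simp: distrib_right intro: Icc.intros)

lemma Ic_mult_Ic: "A \<in> Ic \<Longrightarrow> B \<in> Ic \<Longrightarrow> A * B \<in> Icc"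
proof (induction rule: Ic.induct)
  case (gen P Q)
  from gen(3) show ?case
  proof (induction rule: Ic.induct)
    case (gen P' Q')
    then have "P * cm * (Q * P') * cm * Q' \<in> Icc" using \<open>P \<in> Fm\<close> \<open>Q \<in> Fm\<close>
      by (intro Icc.gen Fm.mult)
    then show ?case by (simp add: mult.assoc)
  qed (auto simp: distrib_left intro: Icc.intros)
qed (auto simp: distrib_right intro: Icc.intros)

lemma cm_Fm_cm_annihilates_Ic:
  assumes "Q \<in> Fm" "W \<in> Ic"
  shows "cm * Q * cm * W = 0"
  using assms(2)
proof (induction rule: Ic.induct)
  case (gen P' Q')
  have "cm * Q * cm * (P' * cm * Q') = (cm * Q * cm * P' * cm) * Q'"
    by (simp only: mult.assoc)
  then show ?case using cm_even_cm_even_cm[OF Fm_mat_even[OF assms(1)] Fm_mat_even[OF gen(1)]]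
    by simp
qed (simp_all add: distrib_left)

lemma cm_Fm_cm_commutes:
  assumes "Q \<in> Fm" "G \<in> Fm"
  shows "cm * Q * cm * G = G * (cm * Q * cm)"
  using generator_commutes_cm_even_cm[OF Fm_mat_even[OF assms(1)]]
  by (intro commutes_with_Fm[OF _ _ assms(2)]) (simp_all add: mult.assoc)

lemma Icc_central: "A \<in> Icc \<Longrightarrow> G \<in> Fm \<Longrightarrow> A * G = G * A"
proof (induction rule: Icc.induct)
  case (gen P Q S)
  let ?Z = "cm * Q * cm"
  have PS: "P * S \<in> Fm" using gen by (intro Fm.mult)
  have "P * cm * Q * cm * S = P * ?Z * S" by (simp add: mult.assoc)
  also have "\<dots> = (?Z * P) * S" by (simp only: cm_Fm_cm_commutes[OF gen(2,1)])
  also have "\<dots> = ?Z * (P * S)" by (simp only: mult.assoc)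
  finally have e: "P * cm * Q * cm * S = ?Z * (P * S)" .
  have "?Z * (G * (P * S) - P * S * G) = 0"
    by (rule cm_Fm_cm_annihilates_Ic[OF gen(2) commutator_in_Ic[OF gen(4) PS]])
  then have "?Z * (P * S) * G = ?Z * G * (P * S)"
    by (simp add: right_diff_distrib mult.assoc)
  also have "\<dots> = G * (?Z * (P * S))"
    using cm_Fm_cm_commutes[OF gen(2,4)] by (simp add: mult.assoc)
  finally show ?case unfolding e .
qed (simp_all add: distrib_left distrib_right)

definition genm :: "nat \<Rightarrow> 'k::comm_ring_1 salg mat22" where
  "genm j = (if j = 1 then C1m else C2m)"

definition lncomm_m :: "nat list \<Rightarrow> 'k::comm_ring_1 salg mat22" where
  "lncomm_m js = foldl (\<lambda>A j. A * genm j - genm j * A) cm js"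

definition commutator_product :: "(nat list \<times> nat) list \<Rightarrow> 'k::comm_ring_1 salg mat22" where
  "commutator_product us = foldr (*) (map (\<lambda>(js, k). lncomm_m js ^ k) us) 1"

lemma lncomm_m_in_Ic: "lncomm_m js \<in> Ic"
proof -
  have "foldl (\<lambda>A j. A * genm j - genm j * A) A js \<in> Ic" if "A \<in> Ic" for A
    using that
  proof (induction js arbitrary: A)
    case (Cons j js)
    have "genm j \<in> Fm" by (simp add: genm_def Fm.gen1 Fm.gen2)
    then have "A * genm j - genm j * A \<in> Ic"
      using Cons.prems by (intro Ic_diff Ic_mult_left Ic_mult_right)
    then show ?case using Cons.IH by simp
  qed simp
  then show ?thesis unfolding lncomm_m_def using cm_in_Ic by blast
qed

lemma Ic_power: "x \<in> Ic \<Longrightarrow> 1 \<le> k \<Longrightarrow> x ^ k \<in> Ic"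
  and Icc_power: "x \<in> Ic \<Longrightarrow> 2 \<le> k \<Longrightarrow> x ^ k \<in> Icc"
proof -
  assume x: "x \<in> Ic"
  then have pow: "x * x ^ j \<in> Ic" for j by (intro Ic_mult_right Fm_power Ic_in_Fm)
  show "1 \<le> k \<Longrightarrow> x ^ k \<in> Ic" using pow by (cases k) auto
  show "2 \<le> k \<Longrightarrow> x ^ k \<in> Icc"
    using Ic_mult_Ic[OF x pow] by (cases k; cases "k - 1") (auto simp: mult.assoc)
qed

lemma commutator_product_in_Fm: "commutator_product us \<in> Fm"
  by (induction us)
     (auto simp: commutator_product_def intro: Fm.one Fm.mult Fm_power Ic_in_Fm lncomm_m_in_Ic)

lemma commutator_product_Cons:
  "commutator_product ((js, k) # us) = lncomm_m js ^ k * commutator_product us"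
  by (simp add: commutator_product_def)

lemma lncomm_m_power_in_Fm: "lncomm_m js ^ k \<in> Fm"
  by (intro Fm_power Ic_in_Fm lncomm_m_in_Ic)

lemma commutator_product_in_Ic:
  "1 \<le> sum_list (map snd us) \<Longrightarrow> (commutator_product us :: 'k::comm_ring_1 salg mat22) \<in> Ic"
proof (induction us)
  case (Cons u us)
  obtain js k where u: "u = (js, k)" by (cases u)
  show ?case
  proof (cases "k = 0")
    case True
    then have "(commutator_product us :: 'k salg mat22) \<in> Ic" using Cons u by simp
    then show ?thesis unfolding u commutator_product_Cons
      by (rule Ic_mult_left[OF _ lncomm_m_power_in_Fm])
  next
    case False
    then have "lncomm_m js ^ k \<in> Ic" by (intro Ic_power lncomm_m_in_Ic) simp
    then show ?thesis unfolding u commutator_product_Cons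
      by (rule Ic_mult_right[OF _ commutator_product_in_Fm])
  qed
qed simp

lemma commutator_product_in_Icc:
  "2 \<le> sum_list (map snd us) \<Longrightarrow> (commutator_product us :: 'k::comm_ring_1 salg mat22) \<in> Icc"
proof (induction us)
  case (Cons u us)
  obtain js k where u: "u = (js, k)" by (cases u)
  let ?x = "lncomm_m js ^ k" and ?y = "commutator_product us :: 'k salg mat22" and ?r = "sum_list (map snd us)"
  have "2 \<le> k + ?r" using Cons.prems u by simp
  then consider "2 \<le> k" | "2 \<le> ?r" | "1 \<le> k" "1 \<le> ?r" by linarith
  then have "?x * ?y \<in> Icc"
  proof cases
    case 1
    then show ?thesis
      by (intro Icc_mult_right[OF _ commutator_product_in_Fm] Icc_power lncomm_m_in_Ic)
  next
    case 2
    then show ?thesis by (intro Icc_mult_left[OF _ lncomm_m_power_in_Fm] Cons.IH)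
  next
    case 3
    then show ?thesis by (intro Ic_mult_Ic Ic_power lncomm_m_in_Ic commutator_product_in_Ic)
  qed
  then show ?case unfolding u commutator_product_Cons .
qed simp

section \<open>Transfer from coefficient functions to the matrix ring\<close>

definition mat2_supported :: "'k::comm_ring_1 mat2 \<Rightarrow> bool" where
  "mat2_supported A \<longleftrightarrow> (\<forall>i j. sc_supported (A i j))"

definition to_mat22 :: "'k::comm_ring_1 mat2 \<Rightarrow> 'k salg mat22" where
  "to_mat22 A = Mat (salg_of (A False False)) (salg_of (A False True))
                    (salg_of (A True False)) (salg_of (A True True))"

lemma salg_of_mult: "sc_supported f \<Longrightarrow> sc_supported g \<Longrightarrow> salg_of (sc_mult f g) = salg_of f * salg_of g"
  and salg_of_add: "sc_supported f \<Longrightarrow> sc_supported g \<Longrightarrow> salg_of (sc_add f g) = salg_of f + salg_of g"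
  by (metis salg_of_inverse mem_Collect_eq sc_of_inverse times_salg.rep_eq plus_salg.rep_eq)+

lemma salg_of_smult: "sc_supported f \<Longrightarrow> salg_of (sc_smult c f) = sconst c * salg_of f"
  by (metis salg_of_inverse mem_Collect_eq sc_of_inverse sc_of_sconst_mult)

lemma mat2_supported_mmult: "mat2_supported A \<Longrightarrow> mat2_supported B \<Longrightarrow> mat2_supported (mmult A B)"
  and mat2_supported_madd: "mat2_supported A \<Longrightarrow> mat2_supported B \<Longrightarrow> mat2_supported (madd A B)"
  and mat2_supported_msmult: "mat2_supported A \<Longrightarrow> mat2_supported (msmult c A)"
  by (simp_all add: mat2_supported_def mmult_def madd_def msmult_def sc_supported_add
      sc_supported_mult sc_supported_smult)

lemma mat2_supported_mone: "mat2_supported mone"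
  and mat2_supported_C1: "mat2_supported C1"
  and mat2_supported_C2: "mat2_supported C2"
  by (simp_all add: mat2_supported_def mone_def C1_def C2_def sc_supported_one sc_supported_zero
      sc_supported_xv sc_supported_yv)

lemma to_mat22_mmult:
  "mat2_supported A \<Longrightarrow> mat2_supported B \<Longrightarrow> to_mat22 (mmult A B) = to_mat22 A * to_mat22 B"
  and to_mat22_madd:
  "mat2_supported A \<Longrightarrow> mat2_supported B \<Longrightarrow> to_mat22 (madd A B) = to_mat22 A + to_mat22 B"
  and to_mat22_msmult: "mat2_supported A \<Longrightarrow> to_mat22 (msmult c A) = const_mat c * to_mat22 A"
  by (simp_all add: mat2_supported_def to_mat22_def mmult_def madd_def msmult_def salg_of_add
      salg_of_mult salg_of_smult sc_supported_mult const_mat_def scalar_mat_def)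

lemma to_mat22_mone: "to_mat22 mone = 1"
  and to_mat22_C1: "to_mat22 C1 = C1m"
  and to_mat22_C2: "to_mat22 C2 = C2m"
  by (simp_all add: to_mat22_def mone_def mat22_one C1_def C2_def C1m_def C2m_def
      zero_salg_def one_salg_def xvar_def yvar_def)

lemma to_mat22_inject:
  assumes "mat2_supported A" "mat2_supported B" "to_mat22 A = to_mat22 B"
  shows "A = B"
proof -
  have "salg_of (A i j) = salg_of (B i j)" for i j
    using assms(3) by (cases i; cases j) (simp_all add: to_mat22_def)
  then show ?thesis
    using assms(1,2) by (metis salg_of_inject mat2_supported_def mem_Collect_eq ext)
qed

lemma Falg_supported: "A \<in> Falg \<Longrightarrow> mat2_supported A"
  by (induction rule: Falg.induct)
     (auto intro: mat2_supported_mone mat2_supported_C1 mat2_supported_C2 mat2_supported_msmult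
       mat2_supported_madd mat2_supported_mmult)

lemma to_mat22_Falg: "A \<in> Falg \<Longrightarrow> to_mat22 A \<in> Fm"
  by (induction rule: Falg.induct)
     (auto simp: to_mat22_mone to_mat22_C1 to_mat22_C2 to_mat22_msmult to_mat22_madd to_mat22_mmult
       Falg_supported intro: Fm.intros)

lemma to_mat22_mmult_Falg:
  "A \<in> Falg \<Longrightarrow> B \<in> Falg \<Longrightarrow> to_mat22 (mmult A B) = to_mat22 A * to_mat22 B"
  by (simp add: to_mat22_mmult Falg_supported)

lemma mpow_Falg: "A \<in> Falg \<Longrightarrow> mpow A k \<in> Falg"
  by (induction k) (auto intro: Falg.one Falg.mult)

lemma to_mat22_mpow: "A \<in> Falg \<Longrightarrow> to_mat22 (mpow A k) = to_mat22 A ^ k"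
  by (induction k) (simp_all add: to_mat22_mone to_mat22_mmult_Falg mpow_Falg power_commutes)

lemma mcomm_Falg: "A \<in> Falg \<Longrightarrow> B \<in> Falg \<Longrightarrow> mcomm A B \<in> Falg"
  by (simp add: mcomm_def Falg.add Falg.smult Falg.mult)

lemma to_mat22_mcomm:
  "A \<in> Falg \<Longrightarrow> B \<in> Falg \<Longrightarrow>
    to_mat22 (mcomm A B) = to_mat22 A * to_mat22 B - to_mat22 B * to_mat22 A"
  by (simp add: mcomm_def to_mat22_madd to_mat22_msmult to_mat22_mmult_Falg Falg_supported
      Falg.mult Falg.smult const_mat_minus_one)

lemma Cgen_Falg: "Cgen j \<in> Falg"
  and to_mat22_Cgen: "to_mat22 (Cgen j) = genm j"
  by (simp_all add: Cgen_def genm_def Falg.gen1 Falg.gen2 to_mat22_C1 to_mat22_C2)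

lemma lncomm_Falg: "(lncomm js :: 'k::comm_ring_1 mat2) \<in> Falg"
  and to_mat22_lncomm: "to_mat22 (lncomm js :: 'k mat2) = lncomm_m js"
proof -
  have "foldl (\<lambda>A j. mcomm A (Cgen j)) A js \<in> Falg \<and>
      to_mat22 (foldl (\<lambda>A j. mcomm A (Cgen j)) A js) =
        foldl (\<lambda>A j. A * genm j - genm j * A) (to_mat22 A) js" if "A \<in> Falg" for A :: "'k mat2"
    using that
    by (induction js arbitrary: A) (simp_all add: mcomm_Falg Cgen_Falg to_mat22_mcomm to_mat22_Cgen)
  moreover have "(mcomm C1 C2 :: 'k mat2) \<in> Falg" by (intro mcomm_Falg Falg.gen1 Falg.gen2)
  moreover have "to_mat22 (mcomm C1 C2 :: 'k mat2) = cm"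
    by (simp add: to_mat22_mcomm Falg.gen1 Falg.gen2 to_mat22_C1 to_mat22_C2 C1m_C2m_commutator)
  ultimately show "(lncomm js :: 'k mat2) \<in> Falg" "to_mat22 (lncomm js :: 'k mat2) = lncomm_m js"
    unfolding lncomm_def lncomm_m_def by simp_all
qed

lemma mprod_Falg: "(\<And>A. A \<in> set As \<Longrightarrow> A \<in> Falg) \<Longrightarrow> mprod As \<in> Falg"
  and to_mat22_mprod:
    "(\<And>A. A \<in> set As \<Longrightarrow> A \<in> Falg) \<Longrightarrow> to_mat22 (mprod As) = foldr (*) (map to_mat22 As) 1"
  by (induction As) (simp_all add: mprod_def Falg.one Falg.mult to_mat22_mone to_mat22_mmult_Falg)

lemma fmono_Falg: "(fmono n m us :: 'k::comm_ring_1 mat2) \<in> Falg"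
  and to_mat22_fmono:
    "to_mat22 (fmono n m us :: 'k mat2) = C1m ^ n * (C2m ^ m * commutator_product us)"
proof -
  let ?As = "map (\<lambda>(js, k). mpow (lncomm js) k) us :: 'k mat2 list"
  have As: "A \<in> Falg" if "A \<in> set ?As" for A using that by (auto intro: mpow_Falg lncomm_Falg)
  have "to_mat22 (mprod ?As) = foldr (*) (map to_mat22 ?As) 1"
    by (rule to_mat22_mprod) (rule As)
  moreover have "map to_mat22 ?As = map (\<lambda>(js, k). lncomm_m js ^ k) us"
    by (auto simp: to_mat22_mpow lncomm_Falg to_mat22_lncomm)
  ultimately have "to_mat22 (mprod ?As) = commutator_product us"
    unfolding commutator_product_def by (simp only:)
  moreover have "mprod ?As \<in> Falg" by (rule mprod_Falg[OF As])
  ultimately show "(fmono n m us :: 'k mat2) \<in> Falg"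
    and "to_mat22 (fmono n m us :: 'k mat2) = C1m ^ n * (C2m ^ m * commutator_product us)"
    by (simp_all add: fmono_def mpow_Falg Falg.gen1 Falg.gen2 Falg.mult to_mat22_mmult_Falg
        to_mat22_mpow to_mat22_C1 to_mat22_C2)
qed

lemma central_in_F_if:
  fixes f :: "'k::comm_ring_1 mat2"
  assumes "f \<in> Falg" "\<And>G. G \<in> Fm \<Longrightarrow> to_mat22 f * G = G * to_mat22 f"
  shows "central_in_F f"
  unfolding central_in_F_def
proof (intro conjI ballI)
  fix g :: "'k mat2" assume "g \<in> Falg"
  with assms have "to_mat22 (mmult f g) = to_mat22 (mmult g f)"
    by (simp add: to_mat22_mmult_Falg to_mat22_Falg)
  then show "mmult f g = mmult g f"
    using assms(1) \<open>g \<in> Falg\<close> by (intro to_mat22_inject Falg_supported Falg.mult)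
qed (rule assms(1))

section \<open>Reduction modulo x_1', x_2', y_2, y_1', y_2'\<close>

text \<open>Setting x_1', x_2', y_2, y_1', y_2' to zero is a ring homomorphism of K[X;Y]; on coefficient
  functions it discards the monomials involving any of these variables.\<close>
definition reduced_monomial :: "(nat \<Rightarrow> nat) \<times> nat set \<Rightarrow> bool" where
  "reduced_monomial mo \<longleftrightarrow> fst mo 2 = 0 \<and> fst mo 3 = 0 \<and> snd mo \<subseteq> {0}"

definition sc_reduce :: "'k::comm_ring_1 sc \<Rightarrow> 'k sc" where
  "sc_reduce f = (\<lambda>mo. if reduced_monomial mo then f mo else 0)"

lemma sc_reduce_mult: "sc_mult (sc_reduce f) (sc_reduce g) = sc_reduce (sc_mult f g)"
proof (rule ext, clarify)
  fix a S
  have down: "reduced_monomial x \<and> reduced_monomial (a - fst x, S - snd x)"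
    if "reduced_monomial (a, S)" "x \<in> divisors a S" for x
    using that by (cases x) (auto simp: reduced_monomial_def divisors_def le_fun_def, (metis le_zero_eq)+)
  have up: "reduced_monomial (a, S)"
    if "x \<in> divisors a S" "reduced_monomial x" "reduced_monomial (a - fst x, S - snd x)" for x
    using that by (cases x) (auto simp: reduced_monomial_def divisors_def le_fun_def)
  show "sc_mult (sc_reduce f) (sc_reduce g) (a, S) = sc_reduce (sc_mult f g) (a, S)"
  proof (cases "reduced_monomial (a, S)")
    case True
    then show ?thesis unfolding sc_mult_apply sc_reduce_def
      by (simp only: if_True) (rule sum.cong[OF refl], simp add: down)
  next
    case False
    then show ?thesis unfolding sc_mult_apply sc_reduce_def
      by (simp only: if_False) (rule sum.neutral, use up in auto)
  qed
qed

lift_definition salg_reduce :: "'k::comm_ring_1 salg \<Rightarrow> 'k salg" is sc_reduce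
  by (simp add: sc_supported_def sc_reduce_def)

lemma salg_reduce_mult: "salg_reduce (x * y) = salg_reduce x * salg_reduce y"
  by transfer (simp add: sc_reduce_mult)

lemma salg_reduce_add: "salg_reduce (x + y) = salg_reduce x + salg_reduce y"
  by transfer (simp add: sc_reduce_def sc_add_def fun_eq_iff)

lemma salg_reduce_zero: "salg_reduce 0 = 0"
  by transfer (simp add: sc_reduce_def)

lemma salg_reduce_one: "salg_reduce 1 = 1"
  by transfer (auto simp: sc_reduce_def sc_one_def reduced_monomial_def)

lemma salg_reduce_diff: "salg_reduce (x - y) = salg_reduce x - salg_reduce y"
  by transfer (simp add: sc_reduce_def sc_add_def sc_smult_def fun_eq_iff)

lemma salg_reduce_xvar: "salg_reduce (xvar i) = (if i \<in> {2, 3} then 0 else xvar i)"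
  by transfer (auto simp: sc_reduce_def xv_def reduced_monomial_def fun_eq_iff)

lemma salg_reduce_yvar: "salg_reduce (yvar i) = (if i = 0 then yvar i else 0)"
  by transfer (auto simp: sc_reduce_def yv_def reduced_monomial_def fun_eq_iff)

definition mat_reduce :: "'k::comm_ring_1 salg mat22 \<Rightarrow> 'k salg mat22" where
  "mat_reduce A = Mat (salg_reduce (m11 A)) (salg_reduce (m12 A)) (salg_reduce (m21 A)) (salg_reduce (m22 A))"

lemma mat_reduce_Mat [simp]:
  "mat_reduce (Mat a b c d) = Mat (salg_reduce a) (salg_reduce b) (salg_reduce c) (salg_reduce d)"
  by (simp add: mat_reduce_def)

lemma mat_reduce_mult: "mat_reduce (A * B) = mat_reduce A * mat_reduce B"
  and mat_reduce_diff: "mat_reduce (A - B) = mat_reduce A - mat_reduce B"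
  by (cases A, cases B, simp add: salg_reduce_mult salg_reduce_add salg_reduce_diff)+

lemma mat_reduce_one: "mat_reduce 1 = 1"
  by (simp add: mat22_one salg_reduce_one salg_reduce_zero)

lemma mat_reduce_power: "mat_reduce (A ^ k) = mat_reduce A ^ k"
  by (induction k) (simp_all add: mat_reduce_one mat_reduce_mult)

abbreviation "P1 \<equiv> Mat (xvar 0) (yvar 0) 0 0 :: 'k::comm_ring_1 salg mat22"
abbreviation "P2 \<equiv> Mat (xvar 1) 0 0 0 :: 'k::comm_ring_1 salg mat22"

lemma mat_reduce_C1m: "mat_reduce C1m = P1"
  and mat_reduce_C2m: "mat_reduce C2m = P2"
  by (simp_all add: C1m_def C2m_def salg_reduce_xvar salg_reduce_yvar)

definition x_monomial :: "'k::comm_ring_1 salg \<Rightarrow> bool" where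
  "x_monomial x \<longleftrightarrow> (\<exists>a. finite_monomial (a, {}) \<and> sc_of x = sc_monomial a {} 1)"

lemma x_monomial_one: "x_monomial 1"
  unfolding x_monomial_def
  by (rule exI[of _ 0]) (auto simp: finite_monomial_def one_salg.rep_eq sc_one_def sc_monomial_def
      zero_fun_def)

lemma x_monomial_xvar: "x_monomial (xvar i)"
  unfolding x_monomial_def
  by (rule exI[of _ "0(i := 1)"]) (auto simp: finite_monomial_def xvar.rep_eq xv_eq_monomial)

lemma finite_monomial_add:
  "finite_monomial (a, {}) \<Longrightarrow> finite_monomial (b, T) \<Longrightarrow> finite_monomial (a + b, T)"
  by (auto simp: finite_monomial_def intro: finite_subset[of _ "{i. a i \<noteq> 0} \<union> {i. b i \<noteq> 0}"])

lemma x_monomial_mult: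
  assumes "x_monomial x" "x_monomial y"
  shows "x_monomial (x * y)"
proof -
  obtain a b where "finite_monomial (a, {})" "sc_of x = sc_monomial a {} 1"
    and "finite_monomial (b, {})" "sc_of y = sc_monomial b {} 1"
    using assms by (auto simp: x_monomial_def)
  then show ?thesis unfolding x_monomial_def
    by (intro exI[of _ "a + b"]) (simp add: times_salg.rep_eq sc_monomial_mult finite_monomial_add)
qed

lemma x_monomial_power: "x_monomial x \<Longrightarrow> x_monomial (x ^ k)"
  by (induction k) (simp_all add: x_monomial_one x_monomial_mult)

lemma x_monomial_mult_yvar_nonzero: "x_monomial x \<Longrightarrow> x * yvar 0 \<noteq> 0"
proof
  assume "x_monomial x" and zero: "x * yvar 0 = 0"
  then obtain a where a: "finite_monomial (a, {})" "sc_of x = sc_monomial a {} 1"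
    by (auto simp: x_monomial_def)
  have "sc_of (x * yvar 0) = sc_monomial (a + 0) {0} 1"
    using a by (simp add: times_salg.rep_eq yvar.rep_eq yv_eq_monomial sc_monomial_mult
        finite_monomial_def)
  then have "sc_of (x * yvar 0) (a, {0}) = 1" by (simp add: sc_monomial_def)
  then show False using zero by (simp add: zero_salg.rep_eq)
qed

definition signed_x_monomial :: "'k::comm_ring_1 salg \<Rightarrow> bool" where
  "signed_x_monomial w \<longleftrightarrow> (\<exists>x. x_monomial x \<and> (w = x \<or> w = - x))"

lemma signed_x_monomial_mult_yvar_nonzero: "signed_x_monomial w \<Longrightarrow> w * yvar 0 \<noteq> 0"
  unfolding signed_x_monomial_def using x_monomial_mult_yvar_nonzero by force

lemma signed_x_monomial_uminus: "signed_x_monomial w \<Longrightarrow> signed_x_monomial (- w)"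
  unfolding signed_x_monomial_def by force

lemma signed_x_monomial_mult: "x_monomial x \<Longrightarrow> signed_x_monomial w \<Longrightarrow> signed_x_monomial (x * w)"
  unfolding signed_x_monomial_def by (metis x_monomial_mult mult_minus_right)

lemma mat_reduce_cm: "mat_reduce cm = Mat 0 (- xvar 1 * yvar 0) 0 0"
proof -
  have "mat_reduce cm = P1 * P2 - P2 * P1"
    by (simp add: C1m_C2m_commutator[symmetric] mat_reduce_diff mat_reduce_mult mat_reduce_C1m
        mat_reduce_C2m)
  then show ?thesis by (simp add: xvar_commute[of 0])
qed

lemma mat_reduce_lncomm_m:
  "\<exists>w. signed_x_monomial w \<and> mat_reduce (lncomm_m js :: 'k::comm_ring_1 salg mat22) = Mat 0 (w * yvar 0) 0 0"
proof -
  have "\<exists>w'. signed_x_monomial w' \<and>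
      mat_reduce (foldl (\<lambda>A j. A * genm j - genm j * A) A js) = Mat 0 (w' * yvar 0) 0 0"
    if "mat_reduce A = Mat 0 (w * yvar 0) 0 0" "signed_x_monomial w" for A :: "'k salg mat22" and w
    using that
  proof (induction js arbitrary: A w)
    case (Cons j js)
    obtain i c where g: "mat_reduce (genm j :: 'k salg mat22) = Mat (xvar i) c 0 0"
      by (cases "j = 1") (auto simp: genm_def mat_reduce_C1m mat_reduce_C2m)
    have "mat_reduce (A * genm j - genm j * A) = Mat 0 ((- (xvar i * w)) * yvar 0) 0 0"
      unfolding mat_reduce_diff mat_reduce_mult g Cons.prems(1) by (simp add: mult.assoc)
    moreover have "signed_x_monomial (- (xvar i * w))"
      using Cons.prems(2) by (intro signed_x_monomial_uminus signed_x_monomial_mult x_monomial_xvar)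
    ultimately show ?case unfolding foldl_Cons by (rule Cons.IH)
  qed auto
  moreover have "signed_x_monomial (- xvar 1)"
    unfolding signed_x_monomial_def using x_monomial_xvar by blast
  ultimately show ?thesis unfolding lncomm_m_def using mat_reduce_cm by blast
qed

lemma P1_power_Suc: "P1 ^ Suc n = Mat (xvar 0 ^ Suc n) (xvar 0 ^ n * yvar 0) 0 0"
  and P2_power_Suc: "P2 ^ Suc n = Mat (xvar 1 ^ Suc n) 0 0 0"
  and P1_power_mult_upper: "P1 ^ n * Mat 0 t 0 0 = Mat 0 (xvar 0 ^ n * t) 0 0"
  and P2_power_mult_upper: "P2 ^ n * Mat 0 t 0 0 = Mat 0 (xvar 1 ^ n * t) 0 0"
  and P1_power_mult_diag: "P1 ^ n * Mat a 0 0 0 = Mat (xvar 0 ^ n * a) 0 0 0"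
  by (induction n) (simp_all add: mat22_one mult.assoc)

lemma x_monomial_xvar_power: "x_monomial (xvar i ^ k * xvar j ^ l)"
  by (intro x_monomial_mult x_monomial_power x_monomial_xvar)

lemma P1_power_P2_power_not_commute_P1:
  assumes "1 \<le> m"
  shows "P1 ^ n * P2 ^ m * P1 \<noteq> P1 * (P1 ^ n * P2 ^ m)"
proof
  obtain m' where m: "m = Suc m'" using assms by (cases m) auto
  assume "P1 ^ n * P2 ^ m * P1 = P1 * (P1 ^ n * P2 ^ m)"
  from arg_cong[OF this, of m12] show False
    unfolding m P2_power_Suc P1_power_mult_diag
    by (simp del: power_Suc) (metis x_monomial_mult_yvar_nonzero x_monomial_xvar_power)
qed

lemma P1_power_not_commute_P2:
  assumes "1 \<le> n"
  shows "P1 ^ n * P2 \<noteq> P2 * P1 ^ n"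
proof
  obtain n' where n: "n = Suc n'" using assms by (cases n) auto
  assume "P1 ^ n * P2 = P2 * P1 ^ n"
  from arg_cong[OF this, of m12] show False
    unfolding n P1_power_Suc
    by (simp add: mult.assoc[symmetric]) (metis x_monomial_mult_yvar_nonzero x_monomial_xvar_power power_one_right)
qed

lemma P1_power_P2_power_upper_not_commute_P2:
  assumes "signed_x_monomial w"
  shows "P1 ^ n * (P2 ^ m * Mat 0 (w * yvar 0) 0 0) * P2
    \<noteq> P2 * (P1 ^ n * (P2 ^ m * Mat 0 (w * yvar 0) 0 0))"
proof
  let ?w = "xvar 1 * (xvar 0 ^ n * (xvar 1 ^ m * w))"
  have X: "P1 ^ n * (P2 ^ m * Mat 0 (w * yvar 0) 0 0) = Mat 0 (xvar 0 ^ n * (xvar 1 ^ m * (w * yvar 0))) 0 0"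
    by (simp only: P1_power_mult_upper P2_power_mult_upper)
  assume "P1 ^ n * (P2 ^ m * Mat 0 (w * yvar 0) 0 0) * P2
    = P2 * (P1 ^ n * (P2 ^ m * Mat 0 (w * yvar 0) 0 0))"
  from arg_cong[OF this, of m12] have "?w * yvar 0 = 0" unfolding X by (simp add: mult.assoc)
  moreover have "signed_x_monomial ?w"
    using assms by (intro signed_x_monomial_mult x_monomial_xvar x_monomial_power)
  ultimately show False using signed_x_monomial_mult_yvar_nonzero by blast
qed

lemma commutator_product_weight_0:
  "sum_list (map snd us) = 0 \<Longrightarrow> commutator_product us = 1"
  by (induction us) (auto simp: commutator_product_def)

lemma commutator_product_weight_1:
  "sum_list (map snd us) = 1 \<Longrightarrow> \<exists>js. commutator_product us = lncomm_m js"
proof (induction us)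
  case (Cons u us)
  obtain js k where u: "u = (js, k)" by (cases u)
  then consider "k = 0" "sum_list (map snd us) = 1" | "k = 1" "sum_list (map snd us) = 0"
    using Cons.prems by fastforce
  then show ?case
    by cases (use Cons.IH u in \<open>auto simp: commutator_product_Cons commutator_product_weight_0\<close>)
qed simp

lemma central_in_F_to_mat22:
  "central_in_F f \<Longrightarrow> g \<in> Falg \<Longrightarrow> to_mat22 f * to_mat22 g = to_mat22 g * to_mat22 f"
  unfolding central_in_F_def by (metis to_mat22_mmult_Falg)

lemma reduced_fmono_not_central:
  fixes n m :: nat and us :: "(nat list \<times> nat) list"
  defines "R \<equiv> P1 ^ n * (P2 ^ m * mat_reduce (commutator_product us :: 'k::comm_ring_1 salg mat22))"
  assumes "sum_list (map snd us) \<le> 1" "n \<noteq> 0 \<or> m \<noteq> 0 \<or> sum_list (map snd us) \<noteq> 0"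
  shows "R * P1 \<noteq> P1 * R \<or> R * P2 \<noteq> P2 * R"
proof (cases "sum_list (map snd us) = 0")
  case True
  then have "R = P1 ^ n * P2 ^ m"
    by (simp add: R_def commutator_product_weight_0 mat_reduce_one)
  then show ?thesis
    using assms(3) True P1_power_P2_power_not_commute_P1[of m n] P1_power_not_commute_P2[of n]
    by (cases "m = 0") (auto simp: mult.assoc)
next
  case False
  then obtain js where "commutator_product us = (lncomm_m js :: 'k salg mat22)"
    using assms(2) commutator_product_weight_1 by (metis le_neq_implies_less less_one)
  moreover obtain w where "signed_x_monomial w"
    "mat_reduce (lncomm_m js :: 'k salg mat22) = Mat 0 (w * yvar 0) 0 0"
    using mat_reduce_lncomm_m by blast
  ultimately show ?thesis
    using P1_power_P2_power_upper_not_commute_P2[of w n m] by (simp add: R_def)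
qed

lemma central_fmono_weight:
  assumes central: "central_in_F (fmono n m us :: 'k::comm_ring_1 mat2)"
  shows "2 \<le> sum_list (map snd us) \<or> (n = 0 \<and> m = 0 \<and> sum_list (map snd us) = 0)"
proof -
  let ?f = "fmono n m us :: 'k mat2"
  let ?R = "mat_reduce (to_mat22 ?f)"
  have "to_mat22 ?f * C1m = C1m * to_mat22 ?f" "to_mat22 ?f * C2m = C2m * to_mat22 ?f"
    using central_in_F_to_mat22[OF central Falg.gen1] central_in_F_to_mat22[OF central Falg.gen2]
    by (simp_all only: to_mat22_C1 to_mat22_C2)
  from this[THEN arg_cong[where f = mat_reduce]] have "?R * P1 = P1 * ?R" "?R * P2 = P2 * ?R"
    by (simp_all only: mat_reduce_mult mat_reduce_C1m mat_reduce_C2m)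
  moreover have "?R = P1 ^ n * (P2 ^ m * mat_reduce (commutator_product us))"
    by (simp only: to_mat22_fmono mat_reduce_mult mat_reduce_power mat_reduce_C1m mat_reduce_C2m)
  ultimately show ?thesis using reduced_fmono_not_central[of us n m] by fastforce
qed

lemma central_fmono_if_weight:
  assumes "2 \<le> sum_list (map snd us) \<or> (n = 0 \<and> m = 0 \<and> sum_list (map snd us) = 0)"
  shows "central_in_F (fmono n m us :: 'k::comm_ring_1 mat2)"
proof (rule central_in_F_if[OF fmono_Falg])
  fix G :: "'k salg mat22" assume "G \<in> Fm"
  consider "to_mat22 (fmono n m us :: 'k mat2) \<in> Icc" | "to_mat22 (fmono n m us :: 'k mat2) = 1"
    using assms by (auto simp: to_mat22_fmono commutator_product_weight_0
        intro: Icc_mult_left Fm_power Fm.gen1 Fm.gen2 Fm.mult commutator_product_in_Icc)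
  then show "to_mat22 (fmono n m us) * G = G * to_mat22 (fmono n m us)"
    using \<open>G \<in> Fm\<close> by cases (simp_all add: Icc_central)
qed

lemma sum_list_snd_eq_0_iff: "sum_list (map snd us) = (0 :: nat) \<longleftrightarrow> (\<forall>(js, k) \<in> set us. k = 0)"
  by (induction us) auto

text \<open>The hypotheses on K and on the indices j_s are not used: the argument works over any
  commutative ring, and genm treats every index other than 1 as 2.\<close>
theorem proposition2:
  fixes n m :: nat and us :: "(nat list \<times> nat) list"
  assumes "infinite (UNIV :: 'k::field set)"
    and "CHAR('k) \<noteq> 2"
    and "\<forall>(js, k) \<in> set us. set js \<subseteq> {1, 2}"
  shows "central_in_F (fmono n m us :: 'k mat2) \<longleftrightarrow>
           (sum_list (map snd us) \<ge> 2 \<or> (n = 0 \<and> m = 0 \<and> (\<forall>(js, k) \<in> set us. k = 0)))"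
  using central_fmono_weight[of n m us] central_fmono_if_weight[of us n m]
  unfolding sum_list_snd_eq_0_iff by blast

end
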